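(* Let $(\hat x_0,\chi,\lambda_0,\bar\varepsilon)\in \mathrm{dom}\, h\times[0,1)\times\mathbb{R}_{++}\times\mathbb{R}_{++}$ and run the method U-CS$(\hat x_0,\chi,\lambda_0,\bar\varepsilon)$ described in the context. Let $(\mu,\nu)=(\mu(\phi),\mu(h))$ and \[ Q(\bar\varepsilon)=\frac{8M_f^2}{(1-\chi)^2}+\bar\varepsilon\left(\lambda_0^{-1}+\frac{2L_f}{(1-\chi)^2}\right). \] Then U-CS terminates in at most \[ \min\left\{\min\left[\frac{1}{\chi}\left(1+\frac{Q(\bar\varepsilon)}{\mu\bar\varepsilon}\right),\ 1+\frac{Q(\bar\varepsilon)}{\nu\bar\varepsilon}\right]\log\left(1+\frac{\mu d_0^2}{\bar\varepsilon}\right),\ \frac{d_0^2Q(\bar\varepsilon)}{\bar\varepsilon^2}\right\}+\left\lceil 2\log\frac{\lambda_0 Q(\bar\varepsilon)}{\bar\varepsilon}\right\rceil \] iterations.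
   Context: Setting: $f,h:\mathbb{R}^n\to\mathbb{R}\cup\{+\infty\}$ are proper lower semicontinuous convex functions with $\mathrm{dom}\, h\subseteq\mathrm{dom}\, f$, $\phi=f+h$, $\phi_*=\inf_x\phi(x)$. A subgradient oracle $f':\mathrm{dom}\, h\to\mathbb{R}^n$ with $f'(x)\in\partial f(x)$ is available, and there are $M_f,L_f\ge0$ with $\|f'(x)-f'(y)\|\le 2M_f+L_f\|x-y\|$ for all $x,y\in\mathrm{dom}\, h$. The set $X_*$ of minimizers of $\phi$ is nonempty. For $x\in\mathrm{dom}\, h$, $\ell_f(u;x):=f(x)+\langle f'(x),u-x\rangle$. For a proper convex function $\psi$, $\mu(\psi)$ denotes the largest $\mu\ge0$ such that $\psi-\frac{\mu}{2}\|\cdot\|^2$ is convex. $d_0:=\min\{\|x-\hat x_0\|:x\in X_*\}$; $\log$ is the natural logarithm. Method U-CS$(\hat x_0,\chi,\lambda_0,\bar\varepsilon)$: Step 0: set $\lambda=\lambda_0$, $k=1$. Step 1: compute $x=\mathrm{argmin}_{u\in\mathbb{R}^n}\{\ell_f(u;\hat x_{k-1})+h(u)+\frac{1}{2\lambda}\|u-\hat x_{k-1}\|^2\}$; if $\phi(x)-\phi_*\le\bar\varepsilon$, stop. Step 2: if $f(x)-\ell_f(x;\hat x_{k-1})-(1-\chi)\|x-\hat x_{k-1}\|^2/(2\lambda)\le(1-\chi)\bar\varepsilon/2$ does not hold, set $\lambda=\lambda/2$ and go to Step 1; else set $\lambda_k=\lambda$, $\hat x_k=x$, $k\leftarrow k+1$,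 and go to Step 1. Conventions: $1/0=+\infty$; when $\mu=0$ the first entry of the outer minimum is interpreted as $+\infty$ (so the first term of the bound equals $d_0^2Q(\bar\varepsilon)/\bar\varepsilon^2$). *)

theory Defs
  imports "HOL-Analysis.Analysis"
begin

definition edom :: "('a \<Rightarrow> ereal) \<Rightarrow> 'a set" where
  "edom \<psi> = {x. \<psi> x < \<infinity>}"

definition proper_fun :: "('a \<Rightarrow> ereal) \<Rightarrow> bool" where
  "proper_fun \<psi> \<longleftrightarrow> (\<forall>x. \<psi> x \<noteq> -\<infinity>) \<and> (\<exists>x. \<psi> x < \<infinity>)"

definition convex_fun :: "('a::real_vector \<Rightarrow> ereal) \<Rightarrow> bool" where
  "convex_fun \<psi> \<longleftrightarrow> convex {(x, t::real). \<psi> x \<le> ereal t}"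

definition lsc_fun :: "('a::topological_space \<Rightarrow> ereal) \<Rightarrow> bool" where
  "lsc_fun \<psi> \<longleftrightarrow> (\<forall>x. \<psi> x \<le> Liminf (at x) \<psi>)"

definition subdiff :: "('a::real_inner \<Rightarrow> ereal) \<Rightarrow> 'a \<Rightarrow> 'a set" where
  "subdiff \<psi> x = {g. \<forall>y. \<psi> y \<ge> \<psi> x + ereal (inner g (y - x))}"

text \<open>Modulus of strong convexity mu(psi): the largest mu \<ge> 0 such that
  psi - (mu/2)||.||^2 is convex (taken in the extended reals, i.e. as a supremum;
  the supremum is attained whenever it is finite).\<close>
definition sc_modulus :: "('a::real_normed_vector \<Rightarrow> ereal) \<Rightarrow> ereal" where
  "sc_modulus \<psi> = Sup {ereal m | m. m \<ge> 0 \<and> convex_fun (\<lambda>x. \<psi> x - ereal (m / 2 * (norm x)\<^sup>2))}"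

definition lin_f :: "('a::real_inner \<Rightarrow> ereal) \<Rightarrow> ('a \<Rightarrow> 'a) \<Rightarrow> 'a \<Rightarrow> 'a \<Rightarrow> ereal" where
  "lin_f f f' u x = f x + ereal (inner (f' x) (u - x))"

text \<open>Step 1 subproblem solution (the minimiser is unique by strong convexity).\<close>
definition ucs_prox :: "('a::real_inner \<Rightarrow> ereal) \<Rightarrow> ('a \<Rightarrow> 'a) \<Rightarrow> ('a \<Rightarrow> ereal) \<Rightarrow> 'a \<Rightarrow> real \<Rightarrow> 'a" where
  "ucs_prox f f' h xh lam =
     (SOME x. \<forall>u. lin_f f f' x xh + h x + ereal ((norm (x - xh))\<^sup>2 / (2 * lam))
               \<le> lin_f f f' u xh + h u + ereal ((norm (u - xh))\<^sup>2 / (2 * lam)))"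

definition ucs_accept :: "('a::real_inner \<Rightarrow> ereal) \<Rightarrow> ('a \<Rightarrow> 'a) \<Rightarrow> real \<Rightarrow> real \<Rightarrow> 'a \<Rightarrow> 'a \<Rightarrow> real \<Rightarrow> bool" where
  "ucs_accept f f' chi eps x xh lam \<longleftrightarrow>
     f x - lin_f f f' x xh - ereal ((1 - chi) * (norm (x - xh))\<^sup>2 / (2 * lam))
       \<le> ereal ((1 - chi) * eps / 2)"

text \<open>State (current prox center, current stepsize) at the start of the j-th execution of
  Step 1 (j = 0, 1, 2, ...), assuming no stop occurred before.\<close>
primrec ucs_state :: "('a::real_inner \<Rightarrow> ereal) \<Rightarrow> ('a \<Rightarrow> 'a) \<Rightarrow> ('a \<Rightarrow> ereal) \<Rightarrow> real \<Rightarrow> real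
    \<Rightarrow> 'a \<Rightarrow> real \<Rightarrow> nat \<Rightarrow> 'a \<times> real" where
  "ucs_state f f' h chi eps x0 lam0 0 = (x0, lam0)"
| "ucs_state f f' h chi eps x0 lam0 (Suc j) =
     (let (xh, lam) = ucs_state f f' h chi eps x0 lam0 j;
          x = ucs_prox f f' h xh lam
      in if ucs_accept f f' chi eps x xh lam then (x, lam) else (xh, lam / 2))"

definition ucs_stops_at :: "('a::real_inner \<Rightarrow> ereal) \<Rightarrow> ('a \<Rightarrow> 'a) \<Rightarrow> ('a \<Rightarrow> ereal) \<Rightarrow> real \<Rightarrow> real
    \<Rightarrow> 'a \<Rightarrow> real \<Rightarrow> nat \<Rightarrow> bool" where
  "ucs_stops_at f f' h chi eps x0 lam0 j \<longleftrightarrow>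
     (let (xh, lam) = ucs_state f f' h chi eps x0 lam0 j;
          x = ucs_prox f f' h xh lam
      in f x + h x - (INF y. f y + h y) \<le> ereal eps)"

definition eln :: "ereal \<Rightarrow> ereal" where
  "eln z = (if z = \<infinity> then \<infinity> else ereal (ln (real_of_ereal z)))"

text \<open>The iteration bound of the theorem, in the extended reals (1/0 = +\<infinity>).\<close>
definition ucs_bound :: "real \<Rightarrow> real \<Rightarrow> real \<Rightarrow> real \<Rightarrow> real \<Rightarrow> ereal \<Rightarrow> ereal \<Rightarrow> real \<Rightarrow> ereal" where
  "ucs_bound Mf Lf chi lam0 eps \<mu> \<nu> d0 =
     (let Q = 8 * Mf\<^sup>2 / (1 - chi)\<^sup>2 + eps * (1 / lam0 + 2 * Lf / (1 - chi)\<^sup>2);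
          A1 = (if chi = 0 then \<infinity> else ereal (1 / chi)) * (1 + ereal Q / (\<mu> * ereal eps));
          A2 = 1 + ereal Q / (\<nu> * ereal eps);
          T1 = (if \<mu> = 0 then \<infinity> else min A1 A2 * eln (1 + \<mu> * ereal (d0\<^sup>2 / eps)))
      in min T1 (ereal (d0\<^sup>2 * Q / eps\<^sup>2)) + ereal (of_int \<lceil>2 * ln (lam0 * Q / eps)\<rceil>))"

end

theory Submission
  imports Defs
begin

text \<open>
  Call a step serious when Step 2 accepts it and Step 1 does not stop. The three-point
  inequality of the prox subproblem, the acceptance test and the subgradient inequality show
  that a serious step from \<open>y\<close> with stepsize \<open>lam\<close> to \<open>x\<close> satisfies
  \<open>|x - x*|^2 + lam (1 + chi) eps \<le> |y - x*|^2\<close>, where \<open>x*\<close> is the minimiser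
  nearest to the starting point. Strong convexity of \<open>h\<close> with modulus \<open>nu\<close> improves
  the left side by the factor \<open>1 + lam nu\<close>; comparing instead with the point
  \<open>(1 - chi) x* + chi x\<close> and using strong convexity of \<open>phi\<close> with modulus \<open>mu\<close>
  gives \<open>(1 + chi lam mu) |x - x*|^2 + lam eps \<le> |y - x*|^2\<close>.
  The Hoelder bound on \<open>f'\<close> makes the acceptance test automatic once
  \<open>lam \<le> (1 - chi) / L\<close> with \<open>L = Lf + 4 Mf^2 / ((1 - chi) eps)\<close>, so the stepsize
  is halved at most \<open>2 log (lam0 Q / eps)\<close> times and never drops below \<open>eps / Q\<close>.
  Summing the additive decrease of \<open>|. - x*|^2\<close>, or the decrease of
  \<open>log (|. - x*|^2 + eps / mu)\<close>, over the serious steps bounds their number by the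
  remaining terms of the estimate.
\<close>

section \<open>Strongly convex extended-real functions\<close>

lemma norm_convex_combination_power2:
  fixes x y :: "'a::real_inner"
  shows "(norm ((1 - t) *\<^sub>R x + t *\<^sub>R y))\<^sup>2
           = (1 - t) * (norm x)\<^sup>2 + t * (norm y)\<^sup>2 - t * (1 - t) * (norm (x - y))\<^sup>2"
  unfolding power2_norm_eq_inner
  by (simp add: inner_add inner_diff inner_scaleR inner_commute algebra_simps power2_eq_square)

lemma convex_funD:
  assumes "convex_fun \<psi>" "\<psi> x = ereal a" "\<psi> y = ereal b" "0 \<le> t" "t \<le> 1"
  shows "\<psi> ((1 - t) *\<^sub>R x + t *\<^sub>R y) \<le> ereal ((1 - t) * a + t * b)"
proof -
  have "(x, a) \<in> {(x, t). \<psi> x \<le> ereal t}" "(y, b) \<in> {(x, t). \<psi> x \<le> ereal t}"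
    using assms by auto
  from convexD_alt[OF assms(1)[unfolded convex_fun_def] this assms(4,5)] show ?thesis
    by simp
qed

lemma convex_funI:
  assumes ninf: "\<And>x. \<psi> x \<noteq> -\<infinity>"
    and ineq: "\<And>x y a b t. \<psi> x = ereal a \<Longrightarrow> \<psi> y = ereal b \<Longrightarrow> 0 \<le> t \<Longrightarrow> t \<le> 1 \<Longrightarrow>
                 \<psi> ((1 - t) *\<^sub>R x + t *\<^sub>R y) \<le> ereal ((1 - t) * a + t * b)"
  shows "convex_fun \<psi>"
  unfolding convex_fun_def
proof (rule convexI)
  fix p q :: "'a \<times> real" and u v :: real
  assume "p \<in> {(x, t). \<psi> x \<le> ereal t}" "q \<in> {(x, t). \<psi> x \<le> ereal t}"
    and uv: "0 \<le> u" "0 \<le> v" "u + v = 1"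
  then obtain x s y r where p: "p = (x, s)" "\<psi> x \<le> ereal s" and q: "q = (y, r)" "\<psi> y \<le> ereal r"
    by auto
  obtain a b where a: "\<psi> x = ereal a" and b: "\<psi> y = ereal b"
    using p(2) q(2) ninf[of x] ninf[of y] by (cases "\<psi> x"; cases "\<psi> y") auto
  have u: "u = 1 - v" using uv by simp
  have "\<psi> (u *\<^sub>R x + v *\<^sub>R y) \<le> ereal (u * a + v * b)"
    using ineq[OF a b] uv u by simp
  also have "u * a + v * b \<le> u * s + v * r"
    using p(2) q(2) a b uv by (intro add_mono mult_left_mono) auto
  finally show "u *\<^sub>R p + v *\<^sub>R q \<in> {(x, t). \<psi> x \<le> ereal t}"
    using p q by simp
qed

definition strongly_convex_fun :: "('a::real_normed_vector \<Rightarrow> ereal) \<Rightarrow> real \<Rightarrow> bool" where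
  "strongly_convex_fun \<psi> m \<longleftrightarrow>
     (\<forall>x y a b t. \<psi> x = ereal a \<longrightarrow> \<psi> y = ereal b \<longrightarrow> 0 \<le> t \<longrightarrow> t \<le> 1 \<longrightarrow>
        \<psi> ((1 - t) *\<^sub>R x + t *\<^sub>R y)
          \<le> ereal ((1 - t) * a + t * b - m / 2 * t * (1 - t) * (norm (x - y))\<^sup>2))"

lemma strongly_convex_funD:
  assumes "strongly_convex_fun \<psi> m" "\<psi> x = ereal a" "\<psi> y = ereal b" "0 \<le> t" "t \<le> 1"
  shows "\<psi> ((1 - t) *\<^sub>R x + t *\<^sub>R y)
           \<le> ereal ((1 - t) * a + t * b - m / 2 * t * (1 - t) * (norm (x - y))\<^sup>2)"
  using assms unfolding strongly_convex_fun_def by blast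

lemma strongly_convex_funI:
  assumes "\<And>x y a b t. \<psi> x = ereal a \<Longrightarrow> \<psi> y = ereal b \<Longrightarrow> 0 \<le> t \<Longrightarrow> t \<le> 1 \<Longrightarrow>
             \<psi> ((1 - t) *\<^sub>R x + t *\<^sub>R y)
               \<le> ereal ((1 - t) * a + t * b - m / 2 * t * (1 - t) * (norm (x - y))\<^sup>2)"
  shows "strongly_convex_fun \<psi> m"
  using assms unfolding strongly_convex_fun_def by blast

lemma convex_fun_minus_square_iff:
  fixes \<psi> :: "'a::real_inner \<Rightarrow> ereal"
  assumes ninf: "\<And>x. \<psi> x \<noteq> -\<infinity>"
  shows "convex_fun (\<lambda>x. \<psi> x - ereal (m / 2 * (norm x)\<^sup>2)) \<longleftrightarrow> strongly_convex_fun \<psi> m"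
proof -
  define q where "q x = m / 2 * (norm x)\<^sup>2" for x :: 'a
  have shift: "\<psi> x - ereal (q x) = ereal a \<longleftrightarrow> \<psi> x = ereal (a + q x)" for x a
    by (cases "\<psi> x") auto
  have ninf': "\<psi> x - ereal (q x) \<noteq> -\<infinity>" for x
    using ninf[of x] by (cases "\<psi> x") auto
  have same: "\<psi> z - ereal (q z) \<le> ereal ((1 - t) * a + t * b)
      \<longleftrightarrow> \<psi> z \<le> ereal ((1 - t) * (a + q x) + t * (b + q y) - m / 2 * t * (1 - t) * (norm (x - y))\<^sup>2)"
    if "z = (1 - t) *\<^sub>R x + t *\<^sub>R y" for x y z a b t
  proof -
    have "q z = (1 - t) * q x + t * q y - m / 2 * t * (1 - t) * (norm (x - y))\<^sup>2"
      unfolding q_def that norm_convex_combination_power2 by (simp add: field_simps)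
    then show ?thesis
      by (cases "\<psi> z") (auto simp: algebra_simps)
  qed
  show ?thesis
  proof
    assume "convex_fun (\<lambda>x. \<psi> x - ereal (m / 2 * (norm x)\<^sup>2))"
    then have cv: "convex_fun (\<lambda>x. \<psi> x - ereal (q x))" by (simp add: q_def)
    show "strongly_convex_fun \<psi> m"
    proof (rule strongly_convex_funI)
      fix x y a b and t :: real
      assume "\<psi> x = ereal a" "\<psi> y = ereal b" "0 \<le> t" "t \<le> 1"
      then show "\<psi> ((1 - t) *\<^sub>R x + t *\<^sub>R y)
          \<le> ereal ((1 - t) * a + t * b - m / 2 * t * (1 - t) * (norm (x - y))\<^sup>2)"
        using convex_funD[OF cv, of x "a - q x" y "b - q y" t] same[OF refl, of t x y "a - q x" "b - q y"]
        by (simp add: shift)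
    qed
  next
    assume sc: "strongly_convex_fun \<psi> m"
    have "convex_fun (\<lambda>x. \<psi> x - ereal (q x))"
    proof (rule convex_funI[OF ninf'])
      fix x y a b and t :: real
      assume "\<psi> x - ereal (q x) = ereal a" "\<psi> y - ereal (q y) = ereal b" "0 \<le> t" "t \<le> 1"
      then show "\<psi> ((1 - t) *\<^sub>R x + t *\<^sub>R y) - ereal (q ((1 - t) *\<^sub>R x + t *\<^sub>R y))
          \<le> ereal ((1 - t) * a + t * b)"
        using strongly_convex_funD[OF sc, of x "a + q x" y "b + q y" t] same[OF refl, of t x y a b]
        by (simp add: shift)
    qed
    then show "convex_fun (\<lambda>x. \<psi> x - ereal (m / 2 * (norm x)\<^sup>2))" by (simp add: q_def)
  qed
qed

corollary convex_fun_iff_strongly_convex_fun_0: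
  fixes \<psi> :: "'a::real_inner \<Rightarrow> ereal"
  assumes "\<And>x. \<psi> x \<noteq> -\<infinity>"
  shows "convex_fun \<psi> \<longleftrightarrow> strongly_convex_fun \<psi> 0"
  using convex_fun_minus_square_iff[of \<psi> 0, OF assms] by (simp add: zero_ereal_def[symmetric])

lemma strongly_convex_fun_mono:
  assumes sc: "strongly_convex_fun \<psi> m" and "m' \<le> m"
  shows "strongly_convex_fun \<psi> m'"
proof (rule strongly_convex_funI)
  fix x y a b and t :: real
  assume "\<psi> x = ereal a" "\<psi> y = ereal b" and t: "0 \<le> t" "t \<le> 1"
  then have "\<psi> ((1 - t) *\<^sub>R x + t *\<^sub>R y)
      \<le> ereal ((1 - t) * a + t * b - m / 2 * (t * (1 - t) * (norm (x - y))\<^sup>2))"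
    using strongly_convex_funD[OF sc] by (simp add: mult.assoc)
  also have "\<dots> \<le> ereal ((1 - t) * a + t * b - m' / 2 * (t * (1 - t) * (norm (x - y))\<^sup>2))"
    using \<open>m' \<le> m\<close> t by (simp add: mult_right_mono)
  finally show "\<psi> ((1 - t) *\<^sub>R x + t *\<^sub>R y)
      \<le> ereal ((1 - t) * a + t * b - m' / 2 * t * (1 - t) * (norm (x - y))\<^sup>2)"
    by (simp add: mult.assoc)
qed

lemma strongly_convex_fun_add:
  assumes f: "strongly_convex_fun f m" and g: "strongly_convex_fun g n"
    and fn: "\<And>x. f x \<noteq> -\<infinity>" and gn: "\<And>x. g x \<noteq> -\<infinity>"
  shows "strongly_convex_fun (\<lambda>x. f x + g x) (m + n)"
proof (rule strongly_convex_funI)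
  fix x y a b and t :: real
  assume a: "f x + g x = ereal a" and b: "f y + g y = ereal b" and t: "0 \<le> t" "t \<le> 1"
  obtain a1 a2 where a12: "f x = ereal a1" "g x = ereal a2" "a = a1 + a2"
    using a fn[of x] gn[of x] by (cases "f x"; cases "g x") auto
  obtain b1 b2 where b12: "f y = ereal b1" "g y = ereal b2" "b = b1 + b2"
    using b fn[of y] gn[of y] by (cases "f y"; cases "g y") auto
  have "f ((1 - t) *\<^sub>R x + t *\<^sub>R y) + g ((1 - t) *\<^sub>R x + t *\<^sub>R y)
      \<le> ereal ((1 - t) * a1 + t * b1 - m / 2 * t * (1 - t) * (norm (x - y))\<^sup>2)
        + ereal ((1 - t) * a2 + t * b2 - n / 2 * t * (1 - t) * (norm (x - y))\<^sup>2)"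
    using strongly_convex_funD[OF f] strongly_convex_funD[OF g] a12 b12 t by (intro add_mono)
  also have "\<dots> = ereal ((1 - t) * a + t * b - (m + n) / 2 * t * (1 - t) * (norm (x - y))\<^sup>2)"
    using a12 b12 by (simp add: algebra_simps add_divide_distrib)
  finally show "f ((1 - t) *\<^sub>R x + t *\<^sub>R y) + g ((1 - t) *\<^sub>R x + t *\<^sub>R y)
      \<le> ereal ((1 - t) * a + t * b - (m + n) / 2 * t * (1 - t) * (norm (x - y))\<^sup>2)" .
qed

lemma strongly_convex_fun_linear_plus_square:
  fixes w y :: "'a::real_inner"
  shows "strongly_convex_fun (\<lambda>u. ereal (inner w (u - y) + c * (norm (u - y))\<^sup>2)) (2 * c)"
proof (rule strongly_convex_funI)
  fix x z a b and t :: real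
  assume "ereal (inner w (x - y) + c * (norm (x - y))\<^sup>2) = ereal a"
    "ereal (inner w (z - y) + c * (norm (z - y))\<^sup>2) = ereal b"
  then have ab: "a = inner w (x - y) + c * (norm (x - y))\<^sup>2" "b = inner w (z - y) + c * (norm (z - y))\<^sup>2"
    by simp_all
  have eq: "(1 - t) *\<^sub>R x + t *\<^sub>R z - y = (1 - t) *\<^sub>R (x - y) + t *\<^sub>R (z - y)"
    by (simp add: algebra_simps)
  show "ereal (inner w ((1 - t) *\<^sub>R x + t *\<^sub>R z - y)
        + c * (norm ((1 - t) *\<^sub>R x + t *\<^sub>R z - y))\<^sup>2)
      \<le> ereal ((1 - t) * a + t * b - 2 * c / 2 * t * (1 - t) * (norm (x - z))\<^sup>2)"
    unfolding ab eq norm_convex_combination_power2 by (simp add: inner_add_right algebra_simps)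
qed

lemma strongly_convex_fun_min_growth:
  assumes sc: "strongly_convex_fun \<psi> m" and min: "\<And>v. \<psi> x \<le> \<psi> v"
    and x: "\<psi> x = ereal a" and u: "\<psi> u = ereal b"
  shows "a + m / 2 * (norm (u - x))\<^sup>2 \<le> b"
proof -
  define N where "N = m / 2 * (norm (u - x))\<^sup>2"
  have "s * N \<le> b - a" if s: "0 < s" "s < 1" for s
  proof -
    have "ereal a \<le> \<psi> ((1 - (1 - s)) *\<^sub>R x + (1 - s) *\<^sub>R u)" using min x by metis
    also have "\<dots> \<le> ereal (s * a + (1 - s) * b - (1 - s) * s * N)"
      using strongly_convex_funD[OF sc x u, of "1 - s"] s by (simp add: N_def norm_minus_commute algebra_simps)
    finally have "(1 - s) * (s * N) \<le> (1 - s) * (b - a)"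
      by (simp add: algebra_simps)
    then show ?thesis using s by simp
  qed
  then have "N \<le> b - a" by (rule field_le_mult_one_interval)
  then show ?thesis unfolding N_def by simp
qed

lemma sc_modulus_nonneg:
  assumes "convex_fun \<psi>"
  shows "0 \<le> sc_modulus \<psi>"
  unfolding sc_modulus_def zero_ereal_def
  by (rule Sup_upper) (use assms in \<open>auto simp: zero_ereal_def[symmetric]\<close>)

lemma strongly_convex_fun_if_less_sc_modulus:
  fixes \<psi> :: "'a::real_inner \<Rightarrow> ereal"
  assumes "\<And>x. \<psi> x \<noteq> -\<infinity>" and "ereal m < sc_modulus \<psi>"
  shows "strongly_convex_fun \<psi> m"
proof -
  obtain m' where "m < m'" "convex_fun (\<lambda>x. \<psi> x - ereal (m' / 2 * (norm x)\<^sup>2))"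
    using assms(2) unfolding sc_modulus_def less_Sup_iff by auto
  then show ?thesis
    using convex_fun_minus_square_iff[OF assms(1)] strongly_convex_fun_mono by fastforce
qed

lemma strongly_convex_fun_sc_modulus:
  fixes \<psi> :: "'a::real_inner \<Rightarrow> ereal"
  assumes ninf: "\<And>x. \<psi> x \<noteq> -\<infinity>" and \<mu>: "sc_modulus \<psi> = ereal \<mu>"
  shows "strongly_convex_fun \<psi> \<mu>"
proof (rule strongly_convex_funI)
  fix x y a b and t :: real
  assume a: "\<psi> x = ereal a" and b: "\<psi> y = ereal b" and t: "0 \<le> t" "t \<le> 1"
  define z where "z = (1 - t) *\<^sub>R x + t *\<^sub>R y"
  define B where "B = t * (1 - t) * (norm (x - y))\<^sup>2 / 2"
  have B: "0 \<le> B" using t by (simp add: B_def)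
  have le: "\<psi> z \<le> ereal ((1 - t) * a + t * b - m * B)" if "m < \<mu>" for m
    using strongly_convex_funD[OF strongly_convex_fun_if_less_sc_modulus[OF ninf] a b t, of m]
      that \<mu> by (simp add: z_def B_def ac_simps)
  obtain c where c: "\<psi> z = ereal c"
    using le[of "\<mu> - 1"] ninf[of z] by (cases "\<psi> z") auto
  have "c \<le> (1 - t) * a + t * b - \<mu> * B"
  proof (cases "B = 0")
    case True
    then show ?thesis using le[of "\<mu> - 1"] c by simp
  next
    case False
    have "\<mu> \<le> ((1 - t) * a + t * b - c) / B"
    proof (rule dense_le)
      fix m assume "m < \<mu>"
      then show "m \<le> ((1 - t) * a + t * b - c) / B"
        using le[of m] c B False by (simp add: field_simps)
    qed
    then show ?thesis using B False by (simp add: field_simps)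
  qed
  then show "\<psi> z \<le> ereal ((1 - t) * a + t * b - \<mu> / 2 * t * (1 - t) * (norm (x - y))\<^sup>2)"
    using c by (simp add: B_def)
qed

lemma sc_modulus_le_add:
  fixes f h :: "'a::real_inner \<Rightarrow> ereal"
  assumes f: "convex_fun f" and fn: "\<And>x. f x \<noteq> -\<infinity>" and hn: "\<And>x. h x \<noteq> -\<infinity>"
  shows "sc_modulus h \<le> sc_modulus (\<lambda>x. f x + h x)"
  unfolding sc_modulus_def
proof (rule Sup_subset_mono, safe)
  fix m :: real
  assume "0 \<le> m" and "convex_fun (\<lambda>x. h x - ereal (m / 2 * (norm x)\<^sup>2))"
  then have "strongly_convex_fun h m"
    using convex_fun_minus_square_iff[of h m] hn by blast
  moreover have "f x + h x \<noteq> -\<infinity>" for x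
    using fn[of x] hn[of x] by simp
  moreover have "strongly_convex_fun (\<lambda>x. f x + h x) (0 + m)"
    using f fn hn \<open>strongly_convex_fun h m\<close>
    by (intro strongly_convex_fun_add) (simp_all add: convex_fun_iff_strongly_convex_fun_0)
  ultimately have "convex_fun (\<lambda>x. f x + h x - ereal (m / 2 * (norm x)\<^sup>2))"
    using convex_fun_minus_square_iff[of "\<lambda>x. f x + h x" m] by simp
  then show "\<exists>m'. ereal m = ereal m' \<and> 0 \<le> m'
      \<and> convex_fun (\<lambda>x. f x + h x - ereal (m' / 2 * (norm x)\<^sup>2))"
    using \<open>0 \<le> m\<close> by blast
qed

lemma sc_modulus_infinite_imp_eq:
  fixes \<psi> :: "'a::real_inner \<Rightarrow> ereal"
  assumes ninf: "\<And>x. \<psi> x \<noteq> -\<infinity>" and "sc_modulus \<psi> = \<infinity>"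
    and a: "\<psi> x = ereal a" and b: "\<psi> y = ereal b"
  shows "x = y"
proof (rule ccontr)
  assume "x \<noteq> y"
  then have N: "(norm (x - y))\<^sup>2 > 0" by simp
  define z where "z = (1 - 1 / 2) *\<^sub>R x + (1 / 2 :: real) *\<^sub>R y"
  have "strongly_convex_fun \<psi> m" for m
    using assms by (intro strongly_convex_fun_if_less_sc_modulus) simp_all
  then have mid: "\<psi> z \<le> ereal ((a + b) / 2 - m / 8 * (norm (x - y))\<^sup>2)" for m
    using strongly_convex_funD[OF _ a b, of m "1 / 2"] by (simp add: z_def algebra_simps add_divide_distrib)
  obtain c where c: "\<psi> z = ereal c"
    using mid[of 0] ninf[of z] by (cases "\<psi> z") auto
  define m where "m = 8 * ((a + b) / 2 - c) / (norm (x - y))\<^sup>2 + 1"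
  have "c \<le> (a + b) / 2 - m / 8 * (norm (x - y))\<^sup>2"
    using mid[of m] c by simp
  moreover have "m / 8 * (norm (x - y))\<^sup>2 = (a + b) / 2 - c + (norm (x - y))\<^sup>2 / 8"
    using N by (simp add: m_def field_simps)
  ultimately show False using N by simp
qed

section \<open>Lower semicontinuity and existence of proximal points\<close>

lemma lsc_funD:
  assumes "lsc_fun \<psi>" "c < \<psi> x"
  shows "eventually (\<lambda>z. c < \<psi> z) (nhds x)"
proof -
  have "c < Liminf (at x) \<psi>"
    using assms unfolding lsc_fun_def by (blast intro: less_le_trans)
  then show ?thesis
    using assms(2) le_Liminf_iff[of "Liminf (at x) \<psi>" "at x" \<psi>] by (simp add: eventually_nhds_conv_at)
qed

lemma open_if_eventually_nhds:
  assumes "\<And>x. x \<in> S \<Longrightarrow> eventually (\<lambda>y. y \<in> S) (nhds x)"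
  shows "open S"
  unfolding open_subopen[of S] using assms unfolding eventually_nhds by (meson subsetI)

lemma ereal_less_add_split:
  fixes p q :: ereal
  assumes "ereal c < p + q" "p \<noteq> -\<infinity>" "q \<noteq> -\<infinity>"
  obtains a b where "ereal a < p" "ereal b < q" "c = a + b"
proof (cases p; cases q)
  fix r s assume "p = ereal r" "q = ereal s"
  then show thesis using assms by (intro that[of "r - (r + s - c) / 2" "s - (r + s - c) / 2"]) auto
next
  fix r assume "p = ereal r" "q = \<infinity>"
  then show thesis by (intro that[of "r - 1" "c - r + 1"]) auto
next
  fix s assume "p = \<infinity>" "q = ereal s"
  then show thesis by (intro that[of "c - s + 1" "s - 1"]) auto
next
  assume "p = \<infinity>" "q = \<infinity>"
  then show thesis by (intro that[of 0 c]) auto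
qed (use assms in simp_all)

lemma lsc_fun_add:
  assumes f: "lsc_fun f" and g: "lsc_fun g" and "\<And>x. f x \<noteq> -\<infinity>" "\<And>x. g x \<noteq> -\<infinity>"
  shows "lsc_fun (\<lambda>x. f x + g x)"
  unfolding lsc_fun_def
proof (intro allI le_Liminf_iff[THEN iffD2] allI impI)
  fix x and y :: ereal
  assume "y < f x + g x"
  then obtain c where c: "y < ereal c" "ereal c < f x + g x"
    using ereal_dense2 by blast
  then obtain a b where ab: "ereal a < f x" "ereal b < g x" "c = a + b"
    using assms(3,4) ereal_less_add_split by metis
  have "eventually (\<lambda>z. ereal a < f z \<and> ereal b < g z) (at x)"
    using lsc_funD[OF f ab(1)] lsc_funD[OF g ab(2)]
    by (auto simp: eventually_nhds_conv_at intro: eventually_conj)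
  then show "eventually (\<lambda>z. y < f z + g z) (at x)"
  proof (rule eventually_mono)
    fix z assume "ereal a < f z \<and> ereal b < g z"
    then have "ereal c < f z + g z"
      using ereal_add_strict_mono2 ab(3) by fastforce
    then show "y < f z + g z" using c(1) by simp
  qed
qed

lemma closed_sublevel_if_lsc_fun:
  assumes "lsc_fun \<psi>"
  shows "closed {x. \<psi> x \<le> c}"
  unfolding closed_def
  by (rule open_if_eventually_nhds) (use lsc_funD[OF assms] in \<open>auto simp: not_le\<close>)

lemma closed_epigraph_if_lsc_fun:
  assumes "lsc_fun \<psi>"
  shows "closed {(x, t::real). \<psi> x \<le> ereal t}"
  unfolding closed_def
proof (rule open_if_eventually_nhds)
  fix p assume "p \<in> - {(x, t). \<psi> x \<le> ereal t}"
  then obtain x t where p: "p = (x, t)" and "ereal t < \<psi> x"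
    by (cases p) auto
  then obtain c where c: "t < c" "ereal c < \<psi> x"
    using ereal_dense2 by fastforce
  have "eventually (\<lambda>s. s < c) (nhds t)"
    using eventually_nhds_in_open[of "{..<c}" t] c(1) by simp
  with lsc_funD[OF assms c(2)]
  have "eventually (\<lambda>q. ereal c < \<psi> (fst q) \<and> snd q < c) (nhds x \<times>\<^sub>F nhds t)"
    by (rule eventually_prodI)
  then show "eventually (\<lambda>q. q \<in> - {(x, t). \<psi> x \<le> ereal t}) (nhds p)"
    unfolding p nhds_prod
  proof (rule eventually_mono)
    fix q :: "'a \<times> real"
    assume "ereal c < \<psi> (fst q) \<and> snd q < c"
    then have "ereal (snd q) < \<psi> (fst q)"
      using less_trans[of "ereal (snd q)" "ereal c" "\<psi> (fst q)"] by simp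
    then show "q \<in> - {(x, t). \<psi> x \<le> ereal t}"
      by (cases q) auto
  qed
qed

lemma proper_funE:
  assumes "proper_fun \<psi>"
  obtains x v where "\<psi> x = ereal v"
  using assms unfolding proper_fun_def by (metis less_ereal.simps(2) ereal_cases)

lemma affine_minorant:
  fixes h :: "'a::euclidean_space \<Rightarrow> ereal"
  assumes "proper_fun h" "convex_fun h" "lsc_fun h"
  obtains a c where "\<And>u. ereal (inner a u + c) \<le> h u"
proof -
  have ninf: "h x \<noteq> -\<infinity>" for x
    using assms(1) unfolding proper_fun_def by auto
  obtain x1 v where v: "h x1 = ereal v"
    using proper_funE[OF assms(1)] .
  define E where "E = {(x, t::real). h x \<le> ereal t}"
  have "(x1, v - 1) \<notin> E" using v by (simp add: E_def)
  then obtain A d where A: "inner A (x1, v - 1) < d" "\<And>p. p \<in> E \<Longrightarrow> d < inner A p"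
    using separating_hyperplane_closed_point[of E] assms(2,3) closed_epigraph_if_lsc_fun
    unfolding E_def convex_fun_def by blast
  obtain a \<beta> where A_eq: "A = (a, \<beta>)" by (cases A)
  have "(x1, v) \<in> E" using v by (simp add: E_def)
  from A(2)[OF this] A(1) have \<beta>: "\<beta> > 0"
    by (simp add: A_eq algebra_simps)
  show thesis
  proof (rule that[of "- (1 / \<beta>) *\<^sub>R a" "d / \<beta>"])
    fix u
    show "ereal (inner (- (1 / \<beta>) *\<^sub>R a) u + d / \<beta>) \<le> h u"
    proof (cases "h u")
      case (real s)
      then have "d < inner a u + \<beta> * s"
        using A(2)[of "(u, s)"] by (simp add: E_def A_eq)
      then show ?thesis using real \<beta> by (simp add: field_simps)
    qed (use ninf in auto)
  qed
qed

lemma inner_plus_square_lower_bound: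
  fixes b v :: "'a::real_inner"
  assumes "lam > 0"
  shows "(norm v)\<^sup>2 / (4 * lam) - lam * (norm b)\<^sup>2 \<le> inner b v + (norm v)\<^sup>2 / (2 * lam)"
proof -
  have "0 \<le> (norm v - 2 * lam * norm b)\<^sup>2 / (4 * lam)"
    using assms by simp
  also have "\<dots> = (norm v)\<^sup>2 / (4 * lam) - norm b * norm v + lam * (norm b)\<^sup>2"
    using assms by (simp add: field_simps power2_eq_square)
  finally have "norm b * norm v \<le> (norm v)\<^sup>2 / (4 * lam) + lam * (norm b)\<^sup>2"
    by simp
  moreover have "(norm v)\<^sup>2 / (2 * lam) = (norm v)\<^sup>2 / (4 * lam) + (norm v)\<^sup>2 / (4 * lam)"
    by (simp add: field_simps)
  ultimately show ?thesis
    using norm_cauchy_schwarz[of "-b" v] by simp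
qed

text \<open>Minimise the height over the compact slice of the epigraph below level \<open>M\<close>.\<close>

lemma closed_epigraph_attains_min:
  fixes \<psi> :: "'a::heine_borel \<Rightarrow> ereal"
  assumes closed: "closed {(x, t::real). \<psi> x \<le> ereal t}" and x1: "\<psi> x1 = ereal M"
    and bounded: "bounded {x. \<psi> x \<le> ereal M}" and below: "\<And>x. ereal c \<le> \<psi> x"
  obtains x where "\<And>u. \<psi> x \<le> \<psi> u"
proof -
  define S where "S = {(x, t::real). \<psi> x \<le> ereal t} \<inter> {p. snd p \<le> M}"
  have "c \<le> t" if "\<psi> x \<le> ereal t" for x t
    using below[of x] that by (metis ereal_less_eq(3) order_trans)
  moreover have "\<psi> x \<le> ereal M" if "\<psi> x \<le> ereal t" "t \<le> M" for x t
    using that by (metis ereal_less_eq(3) order_trans)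
  ultimately have "S \<subseteq> {x. \<psi> x \<le> ereal M} \<times> {c..M}"
    by (auto simp: S_def)
  then have "bounded S"
    using bounded_subset bounded_Times[OF bounded bounded_closed_interval] by blast
  moreover have "closed S"
    unfolding S_def by (intro closed_Int closed closed_Collect_le continuous_intros)
  ultimately have "compact S"
    by (simp add: compact_eq_bounded_closed)
  moreover have "(x1, M) \<in> S"
    using x1 by (simp add: S_def)
  ultimately obtain p where p: "p \<in> S" "\<And>q. q \<in> S \<Longrightarrow> snd p \<le> snd q"
    using continuous_attains_inf[of S snd] continuous_on_snd[OF continuous_on_id] by blast
  obtain x t where xt: "p = (x, t)" "\<psi> x \<le> ereal t" "t \<le> M"
    using p(1) by (auto simp: S_def)
  show thesis
  proof (rule that)
    fix u
    show "\<psi> x \<le> \<psi> u"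
    proof (cases "\<psi> u")
      case (real s)
      have "t \<le> s"
      proof (cases "s \<le> M")
        case True
        then show ?thesis
          using p(2)[of "(u, s)"] real xt(1) by (simp add: S_def)
      qed (use xt in simp)
      then show ?thesis using xt(2) real by (simp add: order_trans)
    qed (use below[of u] in simp_all)
  qed
qed

lemma closed_epigraph_add_continuous:
  assumes "closed {(x, t::real). \<psi> x \<le> ereal t}" and "\<And>x. isCont g x"
  shows "closed {(x, t::real). \<psi> x + ereal (g x) \<le> ereal t}"
proof -
  have "\<psi> x + ereal (g x) \<le> ereal t \<longleftrightarrow> \<psi> x \<le> ereal (t - g x)" for x t
    by (cases "\<psi> x") auto
  then have "{(x, t::real). \<psi> x + ereal (g x) \<le> ereal t}
      = (\<lambda>p. (fst p, snd p - g (fst p))) -` {(x, t). \<psi> x \<le> ereal t}"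
    by auto
  also have "closed \<dots>"
    using assms(1) isCont_o2[OF isCont_fst[OF continuous_ident] assms(2)]
    by (intro continuous_closed_vimage continuous_intros) auto
  finally show ?thesis .
qed

lemma prox_objective_quadratic_minorant:
  fixes h :: "'a::real_inner \<Rightarrow> ereal"
  assumes affine: "\<And>u. ereal (inner a u + c) \<le> h u" and lam: "0 < lam"
  obtains C where "\<And>u. ereal ((norm (u - y))\<^sup>2 / (4 * lam) + C)
                         \<le> h u + ereal (inner w (u - y) + (norm (u - y))\<^sup>2 / (2 * lam))"
proof
  fix u
  define C where "C = c + inner a y - lam * (norm (a + w))\<^sup>2"
  have "(norm (u - y))\<^sup>2 / (4 * lam) + C \<le> inner a u + c + (inner w (u - y) + (norm (u - y))\<^sup>2 / (2 * lam))"
    using inner_plus_square_lower_bound[OF lam, where b = "a + w" and v = "u - y"]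
    by (simp add: C_def inner_add_left inner_diff_right)
  then have "ereal ((norm (u - y))\<^sup>2 / (4 * lam) + C)
      \<le> ereal (inner a u + c) + ereal (inner w (u - y) + (norm (u - y))\<^sup>2 / (2 * lam))"
    by simp
  also have "\<dots> \<le> h u + ereal (inner w (u - y) + (norm (u - y))\<^sup>2 / (2 * lam))"
    using affine by (rule add_right_mono)
  finally show "ereal ((norm (u - y))\<^sup>2 / (4 * lam) + C)
      \<le> h u + ereal (inner w (u - y) + (norm (u - y))\<^sup>2 / (2 * lam))" .
qed

lemma proximal_point_exists:
  fixes h :: "'a::euclidean_space \<Rightarrow> ereal" and w y :: 'a
  assumes h: "proper_fun h" "convex_fun h" "lsc_fun h" and lam: "0 < lam"
  obtains x where "\<And>u. h x + ereal (inner w (x - y) + (norm (x - y))\<^sup>2 / (2 * lam))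
                      \<le> h u + ereal (inner w (u - y) + (norm (u - y))\<^sup>2 / (2 * lam))"
proof -
  define g where "g u = inner w (u - y) + (norm (u - y))\<^sup>2 / (2 * lam)" for u
  obtain a c where "\<And>u. ereal (inner a u + c) \<le> h u"
    using affine_minorant[OF h] by blast
  then obtain C where lower: "\<And>u. ereal ((norm (u - y))\<^sup>2 / (4 * lam) + C) \<le> h u + ereal (g u)"
    using prox_objective_quadratic_minorant[OF _ lam] unfolding g_def by metis
  obtain x1 v where v: "h x1 = ereal v"
    using proper_funE[OF h(1)] .
  define M where "M = v + g x1"
  have "{u. h u + ereal (g u) \<le> ereal M} \<subseteq> cball y (sqrt (4 * lam * (M - C)))"
  proof
    fix u assume "u \<in> {u. h u + ereal (g u) \<le> ereal M}"
    then have "(norm (u - y))\<^sup>2 / (4 * lam) + C \<le> M"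
      using lower[of u] by (metis ereal_less_eq(3) mem_Collect_eq order_trans)
    then have "(norm (u - y))\<^sup>2 \<le> 4 * lam * (M - C)"
      using lam by (simp add: field_simps)
    then show "u \<in> cball y (sqrt (4 * lam * (M - C)))"
      by (simp add: dist_norm norm_minus_commute real_le_rsqrt)
  qed
  then have "bounded {u. h u + ereal (g u) \<le> ereal M}"
    using bounded_cball bounded_subset by blast
  moreover have "closed {(u, t::real). h u + ereal (g u) \<le> ereal t}"
    using closed_epigraph_if_lsc_fun[OF h(3)]
    by (rule closed_epigraph_add_continuous) (use lam in \<open>simp add: g_def continuous_intros\<close>)
  moreover have "ereal C \<le> h u + ereal (g u)" for u
  proof -
    have "ereal C \<le> ereal ((norm (u - y))\<^sup>2 / (4 * lam) + C)"
      using lam by simp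
    then show ?thesis
      using lower[of u] by (rule order_trans)
  qed
  ultimately obtain x where "\<And>u. h x + ereal (g x) \<le> h u + ereal (g u)"
    using closed_epigraph_attains_min[of "\<lambda>u. h u + ereal (g u)" x1 M] v M_def by auto
  then show thesis
    using that unfolding g_def by blast
qed

section \<open>Complexity of U-CS\<close>

lemma ln_one_plus_ge_divide:
  fixes \<rho> :: real
  assumes "0 < \<rho>"
  shows "\<rho> / (1 + \<rho>) \<le> ln (1 + \<rho>)"
proof -
  have "ln (1 / (1 + \<rho>)) \<le> 1 / (1 + \<rho>) - 1"
    using assms by (intro ln_le_minus_one) simp
  then show ?thesis
    using assms by (simp add: ln_div field_simps)
qed

lemma shifted_contraction:
  fixes d c D s t \<rho> :: real
  assumes "(1 + s) * d + t \<le> D" "\<rho> * d \<le> s * d" "\<rho> * c \<le> t"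
  shows "(d + c) * (1 + \<rho>) \<le> D + c"
  using assms by (simp add: algebra_simps)

locale ucs_setting =
  fixes f h :: "'a::euclidean_space \<Rightarrow> ereal"
    and f' :: "'a \<Rightarrow> 'a"
    and Mf Lf chi lam0 eps :: real
    and x0 :: 'a
  assumes f_proper: "proper_fun f" and f_convex: "convex_fun f" and f_lsc: "lsc_fun f"
    and h_proper: "proper_fun h" and h_convex: "convex_fun h" and h_lsc: "lsc_fun h"
    and dom_sub: "edom h \<subseteq> edom f"
    and subgrad_oracle: "\<And>x. x \<in> edom h \<Longrightarrow> f' x \<in> subdiff f x"
    and Lf_nonneg: "Lf \<ge> 0"
    and hoelder: "\<And>x y. x \<in> edom h \<Longrightarrow> y \<in> edom h \<Longrightarrow>
                    norm (f' x - f' y) \<le> 2 * Mf + Lf * norm (x - y)"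
    and Xstar_ne: "{x. \<forall>y. f x + h x \<le> f y + h y} \<noteq> {}"
    and x0_dom: "x0 \<in> edom h"
    and chi_range: "0 \<le> chi" "chi < 1"
    and lam0: "lam0 > 0"
    and eps_pos: "eps > 0"
begin

abbreviation D :: "'a set" where "D \<equiv> edom h"

text \<open>Real parts of \<open>f\<close> and \<open>h\<close>; they carry junk values outside \<open>D\<close>.\<close>

definition fr :: "'a \<Rightarrow> real" where "fr x = real_of_ereal (f x)"
definition hr :: "'a \<Rightarrow> real" where "hr x = real_of_ereal (h x)"

lemma f_not_minf: "f x \<noteq> -\<infinity>"
  using f_proper unfolding proper_fun_def by auto

lemma h_not_minf: "h x \<noteq> -\<infinity>"
  using h_proper unfolding proper_fun_def by auto

lemma h_eq_hr: "x \<in> D \<Longrightarrow> h x = ereal (hr x)"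
  using h_not_minf[of x] unfolding hr_def edom_def by (cases "h x") auto

lemma f_eq_fr: "x \<in> D \<Longrightarrow> f x = ereal (fr x)"
  using dom_sub f_not_minf[of x] unfolding fr_def edom_def by (cases "f x") auto

lemma h_notin_dom: "x \<notin> D \<Longrightarrow> h x = \<infinity>"
  unfolding edom_def by auto

lemma convex_dom: "convex D"
  unfolding convex_alt
proof (intro ballI allI impI)
  fix x y and t :: real
  assume "x \<in> D" "y \<in> D" "0 \<le> t \<and> t \<le> 1"
  then have "h ((1 - t) *\<^sub>R x + t *\<^sub>R y) \<le> ereal ((1 - t) * hr x + t * hr y)"
    by (intro convex_funD[OF h_convex h_eq_hr h_eq_hr]) auto
  then show "(1 - t) *\<^sub>R x + t *\<^sub>R y \<in> D"
    by (auto simp: edom_def)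
qed

lemma subgradient_ineq:
  assumes "y \<in> D" "u \<in> D"
  shows "fr y + inner (f' y) (u - y) \<le> fr u"
proof -
  have "f y + ereal (inner (f' y) (u - y)) \<le> f u"
    using subgrad_oracle[OF assms(1)] unfolding subdiff_def by blast
  then show ?thesis
    using f_eq_fr[OF assms(1)] f_eq_fr[OF assms(2)] by simp
qed

lemma linearization_increment_le:
  assumes "u \<in> D" "v \<in> D"
  shows "fr v - fr u - inner g (v - u) \<le> norm (f' v - g) * norm (v - u)"
proof -
  have "fr v - fr u - inner g (v - u) \<le> inner (f' v - g) (v - u)"
    using subgradient_ineq[OF assms(2,1)] by (simp add: inner_diff_left inner_diff_right)
  also have "\<dots> \<le> norm (f' v - g) * norm (v - u)"
    by (rule norm_cauchy_schwarz)
  finally show ?thesis .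
qed

lemma linearization_increment_on_segment:
  assumes x: "x \<in> D" and y: "y \<in> D" and s: "0 \<le> s" "s \<le> s'" "s' \<le> 1"
  shows "fr (y + s' *\<^sub>R (x - y)) - fr (y + s *\<^sub>R (x - y))
           - inner (f' y) (y + s' *\<^sub>R (x - y) - (y + s *\<^sub>R (x - y)))
         \<le> (2 * Mf + Lf * s' * norm (x - y)) * ((s' - s) * norm (x - y))"
proof -
  have seg: "y + t *\<^sub>R (x - y) \<in> D" if "0 \<le> t" "t \<le> 1" for t
    using convexD_alt[OF convex_dom y x that] by (simp add: algebra_simps)
  have "fr (y + s' *\<^sub>R (x - y)) - fr (y + s *\<^sub>R (x - y))
        - inner (f' y) (y + s' *\<^sub>R (x - y) - (y + s *\<^sub>R (x - y)))
      \<le> norm (f' (y + s' *\<^sub>R (x - y)) - f' y) * norm (y + s' *\<^sub>R (x - y) - (y + s *\<^sub>R (x - y)))"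
    using s by (intro linearization_increment_le seg) simp_all
  also have "norm (y + s' *\<^sub>R (x - y) - (y + s *\<^sub>R (x - y))) = (s' - s) * norm (x - y)"
    using s by (simp add: scaleR_diff_left[symmetric])
  also have "norm (f' (y + s' *\<^sub>R (x - y)) - f' y) * ((s' - s) * norm (x - y))
      \<le> (2 * Mf + Lf * s' * norm (x - y)) * ((s' - s) * norm (x - y))"
    using hoelder[OF seg y] s by (intro mult_right_mono) (simp_all add: mult.assoc)
  finally show ?thesis .
qed

text \<open>Summing the subgradient inequality over a uniform subdivision of the segment from
  \<open>y\<close> to \<open>x\<close> replaces the missing integral form of the Hoelder condition.\<close>
lemma linearization_error_le_subdivided:
  assumes x: "x \<in> D" and y: "y \<in> D" and n: "n \<ge> 1"
  shows "fr x - fr y - inner (f' y) (x - y)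
           \<le> 2 * Mf * norm (x - y) + Lf / 2 * (norm (x - y))\<^sup>2 + (Lf * (norm (x - y))\<^sup>2 / 2) / real n"
proof -
  define r where "r = norm (x - y)"
  define z where "z i = y + (real i / real n) *\<^sub>R (x - y)" for i
  have step: "fr (z (Suc i)) - fr (z i) - inner (f' y) (z (Suc i) - z i)
      \<le> (2 * Mf + Lf * (real (Suc i) / real n) * r) * (r / real n)" if "i < n" for i
  proof -
    have "fr (z (Suc i)) - fr (z i) - inner (f' y) (z (Suc i) - z i)
        \<le> (2 * Mf + Lf * (real (Suc i) / real n) * r) * ((real (Suc i) / real n - real i / real n) * r)"
      unfolding z_def r_def
      by (rule linearization_increment_on_segment[OF x y]) (use that in \<open>simp_all add: divide_right_mono\<close>)
    also have "real (Suc i) / real n - real i / real n = 1 / real n"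
      by (simp add: diff_divide_distrib[symmetric])
    finally show ?thesis by simp
  qed
  have "(\<Sum>i<n. fr (z (Suc i)) - fr (z i)) = fr x - fr y"
    using n sum_lessThan_telescope[of "\<lambda>i. fr (z i)" n] by (simp add: z_def)
  moreover have "(\<Sum>i<n. inner (f' y) (z (Suc i) - z i)) = inner (f' y) (x - y)"
    using n sum_lessThan_telescope[of z n] by (simp add: inner_sum_right[symmetric] z_def)
  ultimately have "fr x - fr y - inner (f' y) (x - y)
      = (\<Sum>i<n. fr (z (Suc i)) - fr (z i) - inner (f' y) (z (Suc i) - z i))"
    by (simp add: sum_subtractf)
  also have "\<dots> \<le> (\<Sum>i<n. 2 * Mf * r / real n + Lf * r\<^sup>2 / (real n)\<^sup>2 * real (Suc i))"
    by (rule sum_mono) (use step in \<open>simp add: field_simps power2_eq_square\<close>)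
  also have "\<dots> = (\<Sum>i<n. 2 * Mf * r / real n) + Lf * r\<^sup>2 / (real n)\<^sup>2 * (\<Sum>i<n. real (Suc i))"
    by (simp only: sum.distrib sum_distrib_left)
  also have "(\<Sum>i<n. 2 * Mf * r / real n) = 2 * Mf * r"
    using n by simp
  also have "(\<Sum>i<n. real (Suc i)) = real n * (real n + 1) / 2"
    by (induction n) (simp_all add: field_simps)
  also have "2 * Mf * r + Lf * r\<^sup>2 / (real n)\<^sup>2 * (real n * (real n + 1) / 2)
      = 2 * Mf * r + Lf / 2 * r\<^sup>2 + (Lf * r\<^sup>2 / 2) / real n"
    using n by (simp add: field_simps power2_eq_square)
  finally show ?thesis by (simp add: r_def)
qed

lemma linearization_error_le:
  assumes "x \<in> D" "y \<in> D"
  shows "fr x - fr y - inner (f' y) (x - y) \<le> 2 * Mf * norm (x - y) + Lf / 2 * (norm (x - y))\<^sup>2"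
proof (rule LIMSEQ_le_const)
  show "(\<lambda>n. 2 * Mf * norm (x - y) + Lf / 2 * (norm (x - y))\<^sup>2 + (Lf * (norm (x - y))\<^sup>2 / 2) / real n)
      \<longlonglongrightarrow> 2 * Mf * norm (x - y) + Lf / 2 * (norm (x - y))\<^sup>2"
    using tendsto_add[OF tendsto_const[of "2 * Mf * norm (x - y) + Lf / 2 * (norm (x - y))\<^sup>2"]
        lim_const_over_n[of "Lf * (norm (x - y))\<^sup>2 / 2"]]
    by simp
  show "\<exists>N. \<forall>n\<ge>N. fr x - fr y - inner (f' y) (x - y)
      \<le> 2 * Mf * norm (x - y) + Lf / 2 * (norm (x - y))\<^sup>2 + (Lf * (norm (x - y))\<^sup>2 / 2) / real n"
    using linearization_error_le_subdivided[OF assms] by blast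
qed

lemma phi_not_minf: "f x + h x \<noteq> -\<infinity>"
  using f_not_minf[of x] h_not_minf[of x] by simp

lemma phi_eq: "x \<in> D \<Longrightarrow> f x + h x = ereal (fr x + hr x)"
  using f_eq_fr h_eq_hr by simp

lemma phi_notin_dom: "x \<notin> D \<Longrightarrow> f x + h x = \<infinity>"
  using h_notin_dom f_not_minf by simp

lemma convex_phi: "convex_fun (\<lambda>x. f x + h x)"
  using strongly_convex_fun_add[of f 0 h 0] f_not_minf h_not_minf f_convex h_convex phi_not_minf
  by (simp add: convex_fun_iff_strongly_convex_fun_0)

lemma strongly_convex_h_0: "strongly_convex_fun h 0"
  using h_convex h_not_minf by (simp add: convex_fun_iff_strongly_convex_fun_0)

definition Xstar :: "'a set" where
  "Xstar = {x. \<forall>y. f x + h x \<le> f y + h y}"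

lemma closed_Xstar: "closed Xstar"
proof -
  obtain xm where xm: "\<And>y. f xm + h xm \<le> f y + h y"
    using Xstar_ne by blast
  then have "Xstar = {x. f x + h x \<le> f xm + h xm}"
    unfolding Xstar_def using order_trans by blast
  then show ?thesis
    using closed_sublevel_if_lsc_fun[OF lsc_fun_add[OF f_lsc h_lsc f_not_minf h_not_minf]] by simp
qed

definition x_star :: 'a where
  "x_star = (SOME x. x \<in> Xstar \<and> infdist x0 Xstar = dist x0 x)"

lemma x_star: "x_star \<in> Xstar" "infdist x0 Xstar = norm (x0 - x_star)"
proof -
  obtain x where "x \<in> Xstar" "infdist x0 Xstar = dist x0 x"
    using infdist_attains_inf[OF closed_Xstar] Xstar_ne unfolding Xstar_def by blast
  then have "x_star \<in> Xstar \<and> infdist x0 Xstar = dist x0 x_star"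
    unfolding x_star_def by (rule someI[where P = "\<lambda>x. x \<in> Xstar \<and> infdist x0 Xstar = dist x0 x", OF conjI])
  then show "x_star \<in> Xstar" "infdist x0 Xstar = norm (x0 - x_star)"
    by (simp_all add: dist_norm)
qed

lemma x_star_in_dom: "x_star \<in> D"
proof (rule ccontr)
  assume "x_star \<notin> D"
  then have inf: "f x_star + h x_star = \<infinity>"
    by (rule phi_notin_dom)
  have "f x_star + h x_star \<le> f x0 + h x0"
    using x_star(1) unfolding Xstar_def by blast
  then show False
    using phi_eq[OF x0_dom]
    unfolding inf by simp
qed

definition phi_star :: real where
  "phi_star = fr x_star + hr x_star"

lemma INF_phi: "(INF y. f y + h y) = ereal phi_star"
proof (rule antisym)
  show "(INF y. f y + h y) \<le> ereal phi_star"
    unfolding phi_star_def phi_eq[OF x_star_in_dom, symmetric] by (rule INF_lower) simp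
  show "ereal phi_star \<le> (INF y. f y + h y)"
    unfolding phi_star_def phi_eq[OF x_star_in_dom, symmetric]
    using x_star(1) unfolding Xstar_def by (blast intro: INF_greatest)
qed

definition prox :: "'a \<Rightarrow> real \<Rightarrow> 'a" where
  "prox y lam = ucs_prox f f' h y lam"

text \<open>The Step 1 objective without the constant \<open>f y\<close>.\<close>

definition prox_obj :: "'a \<Rightarrow> real \<Rightarrow> 'a \<Rightarrow> ereal" where
  "prox_obj y lam u = h u + ereal (inner (f' y) (u - y) + (norm (u - y))\<^sup>2 / (2 * lam))"

lemma prox_obj_eq:
  "u \<in> D \<Longrightarrow> prox_obj y lam u = ereal (hr u + inner (f' y) (u - y) + (norm (u - y))\<^sup>2 / (2 * lam))"
  by (simp add: prox_obj_def h_eq_hr)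

lemma prox_minimal:
  assumes "y \<in> D" "0 < lam"
  shows "prox_obj y lam (prox y lam) \<le> prox_obj y lam u"
proof -
  have shift: "lin_f f f' u y + h u + ereal ((norm (u - y))\<^sup>2 / (2 * lam)) = ereal (fr y) + prox_obj y lam u" for u
    using f_eq_fr[OF assms(1)] by (simp add: lin_f_def prox_obj_def ac_simps)
  obtain x where "\<And>u. prox_obj y lam x \<le> prox_obj y lam u"
    using proximal_point_exists[OF h_proper h_convex h_lsc assms(2)] unfolding prox_obj_def by blast
  then have "\<forall>u. lin_f f f' x y + h x + ereal ((norm (x - y))\<^sup>2 / (2 * lam))
      \<le> lin_f f f' u y + h u + ereal ((norm (u - y))\<^sup>2 / (2 * lam))"
    unfolding shift by (simp add: ereal_add_le_add_iff)
  then have "\<forall>u. lin_f f f' (prox y lam) y + h (prox y lam) + ereal ((norm (prox y lam - y))\<^sup>2 / (2 * lam))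
      \<le> lin_f f f' u y + h u + ereal ((norm (u - y))\<^sup>2 / (2 * lam))"
    unfolding prox_def ucs_prox_def by (rule someI)
  then show ?thesis
    unfolding shift by (simp add: ereal_add_le_add_iff)
qed

lemma prox_in_dom:
  assumes "y \<in> D" "0 < lam"
  shows "prox y lam \<in> D"
proof (rule ccontr)
  assume "prox y lam \<notin> D"
  then have "prox_obj y lam (prox y lam) = \<infinity>"
    by (simp add: prox_obj_def h_notin_dom)
  then show False
    using prox_minimal[OF assms, of y] prox_obj_eq[OF assms(1)] by simp
qed

text \<open>The prox objective is \<open>(1/lam + \<nu>)\<close>-strongly convex, so its minimiser enjoys
  quadratic growth.\<close>
lemma prox_three_point:
  assumes y: "y \<in> D" and lam: "0 < lam" and sc: "strongly_convex_fun h \<nu>" and u: "u \<in> D"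
  defines "x \<equiv> prox y lam"
  shows "hr x + inner (f' y) (x - y) + (norm (x - y))\<^sup>2 / (2 * lam) + (1 / lam + \<nu>) / 2 * (norm (u - x))\<^sup>2
           \<le> hr u + inner (f' y) (u - y) + (norm (u - y))\<^sup>2 / (2 * lam)"
proof -
  have "strongly_convex_fun (\<lambda>u. h u + ereal (inner (f' y) (u - y) + 1 / (2 * lam) * (norm (u - y))\<^sup>2))
      (\<nu> + 2 * (1 / (2 * lam)))"
    by (rule strongly_convex_fun_add[OF sc strongly_convex_fun_linear_plus_square h_not_minf]) simp
  then have "strongly_convex_fun (prox_obj y lam) (\<nu> + 1 / lam)"
    unfolding prox_obj_def by simp
  from strongly_convex_fun_min_growth[OF this prox_minimal[OF y lam]
      prox_obj_eq[OF prox_in_dom[OF y lam]] prox_obj_eq[OF u]]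
  show ?thesis
    using lam by (simp add: x_def algebra_simps)
qed

definition L_eps :: real where
  "L_eps = Lf + 4 * Mf\<^sup>2 / ((1 - chi) * eps)"

definition Q :: real where
  "Q = 8 * Mf\<^sup>2 / (1 - chi)\<^sup>2 + eps * (1 / lam0 + 2 * Lf / (1 - chi)\<^sup>2)"

lemma accept_iff:
  assumes "x \<in> D" "y \<in> D"
  shows "ucs_accept f f' chi eps x y lam \<longleftrightarrow>
           fr x - fr y - inner (f' y) (x - y) - (1 - chi) * (norm (x - y))\<^sup>2 / (2 * lam) \<le> (1 - chi) * eps / 2"
  unfolding ucs_accept_def lin_f_def f_eq_fr[OF assms(1)] f_eq_fr[OF assms(2)] by (simp add: algebra_simps)

lemma accept_if_small_stepsize:
  assumes y: "y \<in> D" and lam: "0 < lam" and small: "lam * L_eps \<le> 1 - chi"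
  shows "ucs_accept f f' chi eps (prox y lam) y lam"
proof -
  define x where "x = prox y lam"
  define r where "r = norm (x - y)"
  define k where "k = (1 - chi) * eps"
  have k: "0 < k" using chi_range eps_pos by (simp add: k_def)
  have x: "x \<in> D" using prox_in_dom[OF y lam] by (simp add: x_def)
  have "lam * L_eps * (r\<^sup>2 / (2 * lam)) \<le> (1 - chi) * (r\<^sup>2 / (2 * lam))"
    using small lam by (intro mult_right_mono) auto
  moreover have "lam * L_eps * (r\<^sup>2 / (2 * lam)) = Lf / 2 * r\<^sup>2 + 2 * Mf\<^sup>2 * r\<^sup>2 / k"
  proof -
    have L: "L_eps = Lf + 4 * Mf\<^sup>2 / k" by (simp add: L_eps_def k_def)
    show ?thesis unfolding L using lam k by (simp add: field_simps)
  qed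
  ultimately have "Lf / 2 * r\<^sup>2 + 2 * Mf\<^sup>2 * r\<^sup>2 / k \<le> (1 - chi) * r\<^sup>2 / (2 * lam)"
    by simp
  moreover have "2 * Mf * r \<le> 2 * Mf\<^sup>2 * r\<^sup>2 / k + k / 2"
  proof -
    have "0 \<le> (2 * Mf * r - k)\<^sup>2 / (2 * k)" using k by simp
    also have "\<dots> = 2 * Mf\<^sup>2 * r\<^sup>2 / k + k / 2 - 2 * Mf * r"
      using k by (simp add: field_simps power2_eq_square)
    finally show ?thesis by simp
  qed
  ultimately show ?thesis
    using linearization_error_le[OF x y] unfolding accept_iff[OF x y] x_def[symmetric] r_def[symmetric]
    by (simp add: k_def)
qed

lemma accepted_step_ineq:
  assumes y: "y \<in> D" and lam: "0 < lam" and acc: "ucs_accept f f' chi eps (prox y lam) y lam"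
    and sc: "strongly_convex_fun h \<nu>" and u: "u \<in> D"
  defines "x \<equiv> prox y lam"
  shows "fr x + hr x + chi * (norm (x - y))\<^sup>2 / (2 * lam) + (1 / lam + \<nu>) / 2 * (norm (u - x))\<^sup>2
           \<le> fr u + hr u + (norm (u - y))\<^sup>2 / (2 * lam) + (1 - chi) * eps / 2"
proof -
  have "(1 - chi) * (norm (x - y))\<^sup>2 / (2 * lam)
      = (norm (x - y))\<^sup>2 / (2 * lam) - chi * (norm (x - y))\<^sup>2 / (2 * lam)"
    by (simp add: diff_divide_distrib left_diff_distrib)
  then show ?thesis
    using prox_three_point[OF y lam sc u] subgradient_ineq[OF y u]
      acc[unfolded accept_iff[OF prox_in_dom[OF y lam] y]]
    unfolding x_def by linarith
qed

text \<open>A step that is accepted in Step 2 without stopping in Step 1; the conjunct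
  \<open>eps \<le> Q * lam\<close> is the stepsize lower bound that the method maintains.\<close>

definition serious_step :: "'a \<Rightarrow> real \<Rightarrow> bool" where
  "serious_step y lam \<longleftrightarrow> y \<in> D \<and> 0 < lam \<and> eps \<le> Q * lam
     \<and> ucs_accept f f' chi eps (prox y lam) y lam
     \<and> eps < fr (prox y lam) + hr (prox y lam) - phi_star"

lemma serious_step_contraction_h:
  assumes step: "serious_step y lam" and sc: "strongly_convex_fun h \<nu>"
  shows "(1 + lam * \<nu>) * (norm (prox y lam - x_star))\<^sup>2 + lam * (1 + chi) * eps \<le> (norm (y - x_star))\<^sup>2"
proof -
  define x where "x = prox y lam"
  define d2 where "d2 = (norm (x - x_star))\<^sup>2"
  define D2 where "D2 = (norm (y - x_star))\<^sup>2"
  have y: "y \<in> D" and lam: "0 < lam" and gap: "eps < fr x + hr x - phi_star"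
    using step by (simp_all add: serious_step_def x_def)
  have "fr x + hr x + chi * (norm (x - y))\<^sup>2 / (2 * lam) + (1 / lam + \<nu>) / 2 * d2
      \<le> phi_star + D2 / (2 * lam) + (1 - chi) * eps / 2"
    using accepted_step_ineq[OF y lam _ sc x_star_in_dom] step
    by (simp add: serious_step_def x_def d2_def D2_def phi_star_def norm_minus_commute)
  moreover have "0 \<le> chi * (norm (x - y))\<^sup>2 / (2 * lam)"
    using chi_range lam by simp
  ultimately have "2 * lam * (eps + (1 / lam + \<nu>) / 2 * d2) \<le> 2 * lam * (D2 / (2 * lam) + (1 - chi) * eps / 2)"
    using gap lam by (intro mult_left_mono) auto
  moreover have "2 * lam * (eps + (1 / lam + \<nu>) / 2 * d2) = 2 * lam * eps + (1 + lam * \<nu>) * d2"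
    "2 * lam * (D2 / (2 * lam) + (1 - chi) * eps / 2) = D2 + lam * eps - lam * chi * eps"
    "lam * (1 + chi) * eps = lam * eps + lam * chi * eps"
    using lam by (simp_all add: field_simps)
  ultimately show ?thesis
    unfolding x_def d2_def D2_def by linarith
qed

lemma serious_step_contraction_phi:
  assumes step: "serious_step y lam" and sc: "strongly_convex_fun (\<lambda>x. f x + h x) \<mu>"
  shows "(1 + chi * lam * \<mu>) * (norm (prox y lam - x_star))\<^sup>2 + lam * eps \<le> (norm (y - x_star))\<^sup>2"
proof -
  define x where "x = prox y lam"
  define u where "u = (1 - chi) *\<^sub>R x_star + chi *\<^sub>R x"
  define d2 where "d2 = (norm (x - x_star))\<^sup>2"
  define D2 where "D2 = (norm (y - x_star))\<^sup>2"
  define r2 where "r2 = (norm (x - y))\<^sup>2"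
  define P where "P = fr x + hr x - phi_star"
  have y: "y \<in> D" and lam: "0 < lam" and acc: "ucs_accept f f' chi eps x y lam" and gap: "eps < P"
    using step by (simp_all add: serious_step_def x_def P_def)
  have x: "x \<in> D"
    using prox_in_dom[OF y lam] by (simp add: x_def)
  have u: "u \<in> D"
    using convexD_alt[OF convex_dom x_star_in_dom x, of chi] chi_range by (simp add: u_def)
  from accepted_step_ineq[OF y lam acc[unfolded x_def] strongly_convex_h_0 u]
  have step_ineq: "fr x + hr x + chi * r2 / (2 * lam) + 1 / lam / 2 * (norm (u - x))\<^sup>2
      \<le> fr u + hr u + (norm (u - y))\<^sup>2 / (2 * lam) + (1 - chi) * eps / 2"
    by (simp add: x_def r2_def)
  have "u - x = (1 - chi) *\<^sub>R (x_star - x)"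
    by (simp add: u_def algebra_simps)
  then have ux: "(norm (u - x))\<^sup>2 = (1 - chi)\<^sup>2 * d2"
    using chi_range by (simp add: d2_def power_mult_distrib norm_minus_commute)
  have "u - y = (1 - chi) *\<^sub>R (x_star - y) + chi *\<^sub>R (x - y)"
    by (simp add: u_def algebra_simps)
  then have uy: "(norm (u - y))\<^sup>2 = (1 - chi) * D2 + chi * r2 - chi * (1 - chi) * d2"
    by (simp add: norm_convex_combination_power2 D2_def r2_def d2_def norm_minus_commute)
  have phi_u: "fr u + hr u \<le> (1 - chi) * phi_star + chi * (fr x + hr x) - \<mu> / 2 * chi * (1 - chi) * d2"
    using strongly_convex_funD[OF sc phi_eq[OF x_star_in_dom] phi_eq[OF x], of chi] chi_range phi_eq[OF u]
    by (simp add: u_def phi_star_def d2_def norm_minus_commute)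
  have "(1 - chi) * (2 * lam * P + (1 + chi * lam * \<mu>) * d2 - D2 - lam * eps)
      = 2 * lam * ((fr x + hr x + chi * r2 / (2 * lam) + 1 / lam / 2 * ((1 - chi)\<^sup>2 * d2))
          - (fr u + hr u + ((1 - chi) * D2 + chi * r2 - chi * (1 - chi) * d2) / (2 * lam) + (1 - chi) * eps / 2))
        + 2 * lam * ((fr u + hr u) - ((1 - chi) * phi_star + chi * (fr x + hr x) - \<mu> / 2 * chi * (1 - chi) * d2))"
    using lam by (simp add: P_def field_simps power2_eq_square)
  also have "\<dots> \<le> 0"
    using step_ineq phi_u lam unfolding ux uy
    by (intro add_nonpos_nonpos mult_nonneg_nonpos) auto
  finally have "2 * lam * P + (1 + chi * lam * \<mu>) * d2 - D2 - lam * eps \<le> 0"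
    using chi_range by (simp add: mult_le_0_iff)
  moreover have "lam * eps < lam * P"
    using gap lam by simp
  ultimately show ?thesis
    by (simp add: x_def d2_def D2_def)
qed

lemma Q_lower_bound: "eps / lam0 + 2 * eps * L_eps / (1 - chi) \<le> Q"
proof -
  define k where "k = 1 - chi"
  have k: "0 < k" "k \<le> 1" using chi_range by (simp_all add: k_def)
  have "2 * eps * Lf / k \<le> 2 * eps * Lf / k\<^sup>2"
    using k eps_pos Lf_nonneg by (intro divide_left_mono) (simp_all add: power2_eq_square mult_le_cancel_left1)
  moreover have "2 * eps * L_eps / k = 2 * eps * Lf / k + 8 * Mf\<^sup>2 / k\<^sup>2"
    using k eps_pos by (simp add: L_eps_def k_def[symmetric] field_simps power2_eq_square)
  moreover have "Q = 8 * Mf\<^sup>2 / k\<^sup>2 + eps / lam0 + 2 * eps * Lf / k\<^sup>2"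
    using k by (simp add: Q_def k_def[symmetric] field_simps)
  ultimately show ?thesis
    by (simp add: k_def)
qed

lemma L_eps_nonneg: "0 \<le> L_eps"
  using Lf_nonneg chi_range eps_pos by (simp add: L_eps_def)

lemma eps_div_lam0_le_Q: "eps / lam0 \<le> Q"
proof -
  have "0 \<le> 2 * eps * L_eps / (1 - chi)"
    using L_eps_nonneg eps_pos chi_range by simp
  then show ?thesis
    using Q_lower_bound by linarith
qed

lemma Q_pos: "0 < Q"
  using eps_div_lam0_le_Q eps_pos lam0 by (meson divide_pos_pos less_le_trans)

definition center :: "nat \<Rightarrow> 'a" where
  "center j = fst (ucs_state f f' h chi eps x0 lam0 j)"

definition stepsize :: "nat \<Rightarrow> real" where
  "stepsize j = snd (ucs_state f f' h chi eps x0 lam0 j)"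

definition accepted :: "nat \<Rightarrow> bool" where
  "accepted j \<longleftrightarrow> ucs_accept f f' chi eps (prox (center j) (stepsize j)) (center j) (stepsize j)"

definition serious_count :: "nat \<Rightarrow> nat" where
  "serious_count j = (\<Sum>i<j. of_bool (accepted i))"

definition halving_count :: "nat \<Rightarrow> nat" where
  "halving_count j = (\<Sum>i<j. of_bool (\<not> accepted i))"

lemma center_0: "center 0 = x0" and stepsize_0: "stepsize 0 = lam0"
  by (simp_all add: center_def stepsize_def)

lemma center_Suc: "center (Suc j) = (if accepted j then prox (center j) (stepsize j) else center j)"
  and stepsize_Suc: "stepsize (Suc j) = (if accepted j then stepsize j else stepsize j / 2)"
  by (simp_all add: center_def stepsize_def accepted_def prox_def split_beta Let_def)

lemma serious_count_0: "serious_count 0 = 0" and halving_count_0: "halving_count 0 = 0"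
  by (simp_all add: serious_count_def halving_count_def)

lemma serious_count_Suc: "serious_count (Suc j) = serious_count j + of_bool (accepted j)"
  and halving_count_Suc: "halving_count (Suc j) = halving_count j + of_bool (\<not> accepted j)"
  by (simp_all add: serious_count_def halving_count_def)

lemma serious_count_add_halving_count: "serious_count j + halving_count j = j"
  by (induction j) (simp_all add: serious_count_0 halving_count_0 serious_count_Suc halving_count_Suc)

text \<open>The stepsize is halved only when it exceeds \<open>(1 - chi) / L_eps\<close>.\<close>
lemma iterate_invariant:
  "center j \<in> D \<and> stepsize j = lam0 / 2 ^ halving_count j
     \<and> (halving_count j = 0 \<or> 1 - chi < 2 * stepsize j * L_eps)"
proof (induction j)
  case 0
  then show ?case
    using x0_dom by (simp add: center_0 stepsize_0 halving_count_0)
next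
  case (Suc j)
  then have y: "center j \<in> D" and lam_eq: "stepsize j = lam0 / 2 ^ halving_count j"
    and big: "halving_count j = 0 \<or> 1 - chi < 2 * stepsize j * L_eps"
    by auto
  have lam: "0 < stepsize j"
    using lam0 lam_eq by simp
  show ?case
  proof (cases "accepted j")
    case True
    then have "center (Suc j) = prox (center j) (stepsize j)" "stepsize (Suc j) = stepsize j"
      "halving_count (Suc j) = halving_count j"
      by (simp_all add: center_Suc stepsize_Suc halving_count_Suc)
    then show ?thesis
      using prox_in_dom[OF y lam] lam_eq big by simp
  next
    case False
    have "1 - chi < stepsize j * L_eps"
    proof (rule ccontr)
      assume "\<not> 1 - chi < stepsize j * L_eps"
      then have "accepted j"
        using accept_if_small_stepsize[OF y lam] by (simp add: accepted_def)
      with False show False by simp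
    qed
    moreover have "center (Suc j) = center j" "stepsize (Suc j) = stepsize j / 2"
      "halving_count (Suc j) = Suc (halving_count j)"
      using False by (simp_all add: center_Suc stepsize_Suc halving_count_Suc)
    ultimately show ?thesis
      using y lam_eq by simp
  qed
qed

lemma center_in_dom: "center j \<in> D"
  and stepsize_eq: "stepsize j = lam0 / 2 ^ halving_count j"
  using iterate_invariant by simp_all

lemma stepsize_pos: "0 < stepsize j"
  using lam0 by (simp add: stepsize_eq)

lemma two_pow_halving_count_le: "(2::real) ^ halving_count j \<le> lam0 * Q / eps"
proof (cases "halving_count j = 0")
  case True
  have "eps \<le> lam0 * Q"
    using eps_div_lam0_le_Q lam0 by (simp add: divide_le_eq mult.commute)
  then show ?thesis
    using True eps_pos by simp
next
  case False
  then have "1 - chi < 2 * stepsize j * L_eps"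
    using iterate_invariant[of j] by (elim conjE disjE) simp_all
  then have "(1 - chi) * 2 ^ halving_count j < 2 * lam0 * L_eps"
    by (simp add: stepsize_eq pos_less_divide_eq)
  then have "2 ^ halving_count j < lam0 * (2 * eps * L_eps / (1 - chi)) / eps"
    using chi_range eps_pos by (simp add: pos_less_divide_eq ac_simps)
  also have "\<dots> \<le> lam0 * Q / eps"
  proof -
    have "0 \<le> eps / lam0"
      using eps_pos lam0 by simp
    then have "2 * eps * L_eps / (1 - chi) \<le> Q"
      using Q_lower_bound by linarith
    then show ?thesis
      using lam0 eps_pos by (intro divide_right_mono mult_left_mono) simp_all
  qed
  finally show ?thesis by simp
qed

lemma stepsize_lower_bound: "eps \<le> Q * stepsize j"
proof -
  have "2 ^ halving_count j * eps \<le> lam0 * Q"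
    using two_pow_halving_count_le[of j] eps_pos by (simp add: pos_le_divide_eq)
  then show ?thesis
    by (simp add: stepsize_eq pos_le_divide_eq mult.commute)
qed

lemma halving_count_le: "real (halving_count j) \<le> of_int \<lceil>2 * ln (lam0 * Q / eps)\<rceil>"
proof -
  have "0 < lam0 * Q / eps"
    using lam0 Q_pos eps_pos by simp
  then have "ln (2 ^ halving_count j) \<le> ln (lam0 * Q / eps)"
    using two_pow_halving_count_le[of j] by (subst ln_le_cancel_iff) auto
  then have "real (halving_count j) * ln 2 \<le> ln (lam0 * Q / eps)"
    by (simp add: ln_realpow)
  moreover have "1 / 2 \<le> ln (2::real)"
    using ln_one_plus_ge_divide[of 1] by simp
  then have "real (halving_count j) * (1 / 2) \<le> real (halving_count j) * ln 2"
    by (intro mult_left_mono) simp_all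
  ultimately have "real (halving_count j) \<le> 2 * ln (lam0 * Q / eps)"
    by linarith
  then show ?thesis
    by (meson le_of_int_ceiling order_trans)
qed

definition no_stop_before :: "nat \<Rightarrow> bool" where
  "no_stop_before j \<longleftrightarrow> (\<forall>i<j. \<not> ucs_stops_at f f' h chi eps x0 lam0 i)"

lemma stops_iff:
  "ucs_stops_at f f' h chi eps x0 lam0 j \<longleftrightarrow>
     fr (prox (center j) (stepsize j)) + hr (prox (center j) (stepsize j)) - phi_star \<le> eps"
proof -
  define x where "x = prox (center j) (stepsize j)"
  have "ucs_stops_at f f' h chi eps x0 lam0 j \<longleftrightarrow> f x + h x - (INF y. f y + h y) \<le> ereal eps"
    unfolding ucs_stops_at_def x_def prox_def center_def stepsize_def by (simp add: split_beta Let_def)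
  also have "\<dots> \<longleftrightarrow> fr x + hr x - phi_star \<le> eps"
    using phi_eq[OF prox_in_dom[OF center_in_dom stepsize_pos]] by (simp add: x_def INF_phi)
  finally show ?thesis by (simp add: x_def)
qed

lemma serious_step_if_accepted:
  assumes "accepted j" "\<not> ucs_stops_at f f' h chi eps x0 lam0 j"
  shows "serious_step (center j) (stepsize j)"
  using assms center_in_dom stepsize_pos stepsize_lower_bound
  unfolding serious_step_def accepted_def stops_iff by auto

lemma lyapunov_bound:
  assumes decrease: "\<And>y lam. serious_step y lam \<Longrightarrow> V (prox y lam) + a \<le> V y"
    and "no_stop_before j"
  shows "V (center j) + real (serious_count j) * a \<le> V x0"
  using assms(2)
proof (induction j)
  case 0
  then show ?case by (simp add: center_0 serious_count_0)
next
  case (Suc j)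
  then have IH: "V (center j) + real (serious_count j) * a \<le> V x0"
    and running: "\<not> ucs_stops_at f f' h chi eps x0 lam0 j"
    by (simp_all add: no_stop_before_def)
  show ?case
  proof (cases "accepted j")
    case True
    then have "V (center (Suc j)) + a \<le> V (center j)"
      using decrease[OF serious_step_if_accepted[OF True running]] by (simp add: center_Suc)
    then show ?thesis
      using IH True by (simp add: serious_count_Suc algebra_simps)
  next
    case False
    then show ?thesis
      using IH by (simp add: center_Suc serious_count_Suc)
  qed
qed

lemma serious_count_le_sublinear:
  assumes "no_stop_before j"
  shows "real (serious_count j) \<le> (norm (x0 - x_star))\<^sup>2 * Q / eps\<^sup>2"
proof -
  have "(norm (center j - x_star))\<^sup>2 + real (serious_count j) * (eps\<^sup>2 / Q) \<le> (norm (x0 - x_star))\<^sup>2"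
  proof (rule lyapunov_bound[OF _ assms])
    fix y lam
    assume step: "serious_step y lam"
    then have "eps\<^sup>2 / Q \<le> lam * eps"
      using Q_pos eps_pos by (simp add: serious_step_def power2_eq_square divide_le_eq ac_simps)
    also have "\<dots> \<le> lam * (1 + chi) * eps"
      using step chi_range eps_pos by (simp add: serious_step_def)
    finally show "(norm (prox y lam - x_star))\<^sup>2 + eps\<^sup>2 / Q \<le> (norm (y - x_star))\<^sup>2"
      using serious_step_contraction_h[OF step strongly_convex_h_0] by simp
  qed
  then have "real (serious_count j) * (eps\<^sup>2 / Q) \<le> (norm (x0 - x_star))\<^sup>2"
    using zero_le_power2[of "norm (center j - x_star)"] by linarith
  then show ?thesis
    using Q_pos eps_pos by (simp add: field_simps)
qed

lemma serious_count_le_log: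
  assumes no_stop: "no_stop_before j" and c: "0 < c" and \<rho>: "0 < \<rho>"
    and decrease: "\<And>y lam. serious_step y lam \<Longrightarrow>
      ((norm (prox y lam - x_star))\<^sup>2 + c) * (1 + \<rho>) \<le> (norm (y - x_star))\<^sup>2 + c"
  shows "real (serious_count j) \<le> (1 + 1 / \<rho>) * ln (1 + (norm (x0 - x_star))\<^sup>2 / c)"
proof -
  define V where "V z = ln ((norm (z - x_star))\<^sup>2 + c)" for z
  define L where "L = ln (1 + (norm (x0 - x_star))\<^sup>2 / c)"
  have "V (center j) + real (serious_count j) * ln (1 + \<rho>) \<le> V x0"
  proof (rule lyapunov_bound[OF _ no_stop])
    fix y lam
    assume "serious_step y lam"
    have pos: "0 < (norm (prox y lam - x_star))\<^sup>2 + c"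
      using c by (simp add: add_nonneg_pos)
    then have "V (prox y lam) + ln (1 + \<rho>) = ln (((norm (prox y lam - x_star))\<^sup>2 + c) * (1 + \<rho>))"
      using \<rho> by (simp add: V_def ln_mult)
    also have "\<dots> \<le> V y"
      using decrease[OF \<open>serious_step y lam\<close>] pos \<rho> unfolding V_def
      by (subst ln_le_cancel_iff) (simp_all add: add_nonneg_pos c)
    finally show "V (prox y lam) + ln (1 + \<rho>) \<le> V y" .
  qed
  moreover have "ln c \<le> V (center j)"
    using c unfolding V_def by (subst ln_le_cancel_iff) (simp_all add: add_nonneg_pos)
  moreover have "V x0 = ln c + L"
  proof -
    have eq: "(norm (x0 - x_star))\<^sup>2 + c = c * (1 + (norm (x0 - x_star))\<^sup>2 / c)"
      using c by (simp add: field_simps)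
    show ?thesis
      unfolding V_def L_def eq using c by (intro ln_mult_pos) (simp_all add: add_pos_nonneg)
  qed
  ultimately have "real (serious_count j) * ln (1 + \<rho>) \<le> L"
    by linarith
  moreover have "real (serious_count j) * (\<rho> / (1 + \<rho>)) \<le> real (serious_count j) * ln (1 + \<rho>)"
    using ln_one_plus_ge_divide[OF \<rho>] by (intro mult_left_mono) simp_all
  ultimately have "real (serious_count j) * \<rho> / (1 + \<rho>) \<le> L"
    by simp
  then have "real (serious_count j) * \<rho> \<le> L * (1 + \<rho>)"
    using \<rho> by (simp add: pos_divide_le_eq)
  then show ?thesis
    using \<rho> by (simp add: L_def field_simps)
qed

lemma serious_count_le_phi:
  assumes no_stop: "no_stop_before j" and \<mu>: "0 < \<mu>" "strongly_convex_fun (\<lambda>x. f x + h x) \<mu>"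
    and chi: "0 < chi"
  shows "real (serious_count j) \<le> 1 / chi * (1 + Q / (\<mu> * eps)) * ln (1 + \<mu> * (norm (x0 - x_star))\<^sup>2 / eps)"
proof -
  have "real (serious_count j)
      \<le> (1 + 1 / (chi * \<mu> * eps / Q)) * ln (1 + (norm (x0 - x_star))\<^sup>2 / (eps / \<mu>))"
  proof (rule serious_count_le_log[OF no_stop])
    show "0 < eps / \<mu>" "0 < chi * \<mu> * eps / Q"
      using \<mu> chi eps_pos Q_pos by simp_all
    fix y lam
    assume step: "serious_step y lam"
    then have lam: "0 < lam" and el: "eps / Q \<le> lam"
      using Q_pos by (simp_all add: serious_step_def divide_le_eq ac_simps)
    have "chi * \<mu> * eps / Q \<le> chi * lam * \<mu>"
      using mult_left_mono[OF el, of "chi * \<mu>"] \<mu> chi by (simp add: ac_simps)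
    then have "chi * \<mu> * eps / Q * (norm (prox y lam - x_star))\<^sup>2
        \<le> chi * lam * \<mu> * (norm (prox y lam - x_star))\<^sup>2"
      by (rule mult_right_mono) simp
    moreover have "chi * (eps / Q) \<le> lam"
      using el chi_range eps_pos Q_pos by (meson mult_left_le_one_le divide_nonneg_nonneg less_le order_trans)
    then have "chi * \<mu> * eps / Q * (eps / \<mu>) \<le> lam * eps"
      using mult_right_mono[of "chi * (eps / Q)" lam eps] \<mu> eps_pos by (simp add: field_simps)
    ultimately show "((norm (prox y lam - x_star))\<^sup>2 + eps / \<mu>) * (1 + chi * \<mu> * eps / Q)
        \<le> (norm (y - x_star))\<^sup>2 + eps / \<mu>"
      using serious_step_contraction_phi[OF step \<mu>(2)] by (intro shifted_contraction)
  qed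
  also have "(norm (x0 - x_star))\<^sup>2 / (eps / \<mu>) = \<mu> * (norm (x0 - x_star))\<^sup>2 / eps"
    by simp
  also have "1 + 1 / (chi * \<mu> * eps / Q) \<le> 1 / chi * (1 + Q / (\<mu> * eps))"
  proof -
    have "1 \<le> 1 / chi"
      using chi chi_range by simp
    then show ?thesis
      by (simp add: distrib_left)
  qed
  then have "(1 + 1 / (chi * \<mu> * eps / Q)) * ln (1 + \<mu> * (norm (x0 - x_star))\<^sup>2 / eps)
      \<le> 1 / chi * (1 + Q / (\<mu> * eps)) * ln (1 + \<mu> * (norm (x0 - x_star))\<^sup>2 / eps)"
    using \<mu> eps_pos by (intro mult_right_mono) simp_all
  finally show ?thesis .
qed

lemma serious_count_le_h:
  assumes no_stop: "no_stop_before j" and \<nu>: "0 < \<nu>" "strongly_convex_fun h \<nu>" and m: "\<nu> \<le> m"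
  shows "real (serious_count j) \<le> (1 + Q / (\<nu> * eps)) * ln (1 + m * (norm (x0 - x_star))\<^sup>2 / eps)"
proof -
  have "real (serious_count j) \<le> (1 + 1 / (\<nu> * eps / Q)) * ln (1 + (norm (x0 - x_star))\<^sup>2 / (eps / m))"
  proof (rule serious_count_le_log[OF no_stop])
    show "0 < eps / m" "0 < \<nu> * eps / Q"
      using \<nu> m eps_pos Q_pos by simp_all
    fix y lam
    assume step: "serious_step y lam"
    then have lam: "0 < lam" and el: "eps / Q \<le> lam"
      using Q_pos by (simp_all add: serious_step_def divide_le_eq ac_simps)
    have "\<nu> * eps / Q \<le> lam * \<nu>"
      using mult_left_mono[OF el, of \<nu>] \<nu> by (simp add: ac_simps)
    then have "\<nu> * eps / Q * (norm (prox y lam - x_star))\<^sup>2 \<le> lam * \<nu> * (norm (prox y lam - x_star))\<^sup>2"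
      by (rule mult_right_mono) simp
    moreover have "\<nu> / m * (eps / Q) * eps \<le> 1 * lam * ((1 + chi) * eps)"
      using el lam \<nu> m chi_range eps_pos Q_pos by (intro mult_mono) simp_all
    then have "\<nu> * eps / Q * (eps / m) \<le> lam * (1 + chi) * eps"
      by (simp add: field_simps)
    ultimately show "((norm (prox y lam - x_star))\<^sup>2 + eps / m) * (1 + \<nu> * eps / Q)
        \<le> (norm (y - x_star))\<^sup>2 + eps / m"
      using serious_step_contraction_h[OF step \<nu>(2)] by (intro shifted_contraction)
  qed
  then show ?thesis
    by (simp add: mult.commute)
qed

lemma iteration_count_le: "real j \<le> real (serious_count j) + of_int \<lceil>2 * ln (lam0 * Q / eps)\<rceil>"
  using serious_count_add_halving_count[of j] halving_count_le[of j] by linarith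

lemma stop_exists:
  obtains j where "ucs_stops_at f f' h chi eps x0 lam0 j" "no_stop_before j"
proof -
  have "\<exists>j. ucs_stops_at f f' h chi eps x0 lam0 j"
  proof (rule ccontr)
    assume "\<not> ?thesis"
    then have all: "no_stop_before j" for j
      by (simp add: no_stop_before_def)
    have bound: "real j \<le> (norm (x0 - x_star))\<^sup>2 * Q / eps\<^sup>2 + of_int \<lceil>2 * ln (lam0 * Q / eps)\<rceil>" for j
      using iteration_count_le[of j] serious_count_le_sublinear[OF all[of j]] by linarith
    show False
      using bound[of "nat \<lceil>(norm (x0 - x_star))\<^sup>2 * Q / eps\<^sup>2 + of_int \<lceil>2 * ln (lam0 * Q / eps)\<rceil>\<rceil> + 1"]
      by linarith
  qed
  then show thesis
    using that exists_least_iff[of "ucs_stops_at f f' h chi eps x0 lam0"]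
    by (auto simp: no_stop_before_def)
qed

lemma serious_count_le_ereal_phi:
  assumes no_stop: "no_stop_before j" and \<mu>: "sc_modulus (\<lambda>x. f x + h x) = ereal m" "0 < m"
    and d0: "0 < norm (x0 - x_star)"
  shows "ereal (real (serious_count j))
    \<le> (if chi = 0 then \<infinity> else ereal (1 / chi)) * (1 + ereal Q / (ereal m * ereal eps))
        * ereal (ln (1 + m * (norm (x0 - x_star))\<^sup>2 / eps))"
proof (cases "chi = 0")
  case True
  have "0 < ln (1 + m * (norm (x0 - x_star))\<^sup>2 / eps)"
    using \<mu>(2) d0 eps_pos by (intro ln_gt_zero) simp
  moreover have "0 < 1 + Q / (m * eps)"
    using \<mu>(2) eps_pos Q_pos by (simp add: add_pos_pos)
  ultimately show ?thesis
    using True \<mu>(2) eps_pos by simp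
next
  case False
  have "strongly_convex_fun (\<lambda>x. f x + h x) m"
    using strongly_convex_fun_sc_modulus[OF phi_not_minf \<mu>(1)] .
  then show ?thesis
    using serious_count_le_phi[OF no_stop \<mu>(2) _ ] False chi_range \<mu>(2) eps_pos by (simp add: add.commute)
qed

lemma serious_count_le_ereal_h:
  assumes no_stop: "no_stop_before j" and \<nu>: "sc_modulus h = ereal n" "0 \<le> n" "n \<le> m"
    and "0 < m" and d0: "0 < norm (x0 - x_star)"
  shows "ereal (real (serious_count j))
    \<le> (1 + ereal Q / (ereal n * ereal eps)) * ereal (ln (1 + m * (norm (x0 - x_star))\<^sup>2 / eps))"
proof (cases "n = 0")
  case True
  have "0 < ln (1 + m * (norm (x0 - x_star))\<^sup>2 / eps)"
    using \<open>0 < m\<close> d0 eps_pos by (intro ln_gt_zero) simp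
  then show ?thesis
    using True Q_pos by simp
next
  case False
  then have "0 < n" using \<nu>(2) by simp
  then show ?thesis
    using serious_count_le_h[OF no_stop \<open>0 < n\<close> strongly_convex_fun_sc_modulus[OF h_not_minf \<nu>(1)] \<nu>(3)]
      eps_pos by (simp add: add.commute)
qed

lemma serious_count_le_linear_term:
  assumes no_stop: "no_stop_before j"
  defines "\<mu> \<equiv> sc_modulus (\<lambda>x. f x + h x)" and "\<nu> \<equiv> sc_modulus h"
  shows "ereal (real (serious_count j))
    \<le> (if \<mu> = 0 then \<infinity>
        else min ((if chi = 0 then \<infinity> else ereal (1 / chi)) * (1 + ereal Q / (\<mu> * ereal eps)))
                 (1 + ereal Q / (\<nu> * ereal eps))
             * eln (1 + \<mu> * ereal ((norm (x0 - x_star))\<^sup>2 / eps)))"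
proof -
  define A1 where "A1 = (if chi = 0 then \<infinity> else ereal (1 / chi)) * (1 + ereal Q / (\<mu> * ereal eps))"
  define A2 where "A2 = 1 + ereal Q / (\<nu> * ereal eps)"
  define E where "E = eln (1 + \<mu> * ereal ((norm (x0 - x_star))\<^sup>2 / eps))"
  have bound: "ereal (real (serious_count j)) \<le> min A1 A2 * E" if "\<mu> \<noteq> 0"
  proof (cases "x0 = x_star")
    case True
    then have "serious_count j = 0" and "E = 0"
      using serious_count_le_sublinear[OF no_stop] by (simp_all add: E_def eln_def zero_ereal_def[symmetric])
    then show ?thesis by simp
  next
    case False
    then have d0: "0 < norm (x0 - x_star)" by simp
    have "0 \<le> \<mu>" "\<mu> \<noteq> \<infinity>"
      using sc_modulus_nonneg[OF convex_phi]
        sc_modulus_infinite_imp_eq[OF phi_not_minf _ phi_eq[OF x0_dom] phi_eq[OF x_star_in_dom]] False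
      by (auto simp: \<mu>_def)
    then obtain m where m: "\<mu> = ereal m" "0 < m"
      using \<open>\<mu> \<noteq> 0\<close> by (cases \<mu>) auto
    have "0 \<le> \<nu>" "\<nu> \<le> \<mu>"
      unfolding \<mu>_def \<nu>_def
      by (simp_all add: sc_modulus_nonneg[OF h_convex] sc_modulus_le_add[OF f_convex f_not_minf h_not_minf])
    then obtain n where n: "\<nu> = ereal n" "0 \<le> n" "n \<le> m"
      using m by (cases \<nu>) auto
    have E: "E = ereal (ln (1 + m * (norm (x0 - x_star))\<^sup>2 / eps))"
      using d0 by (simp add: E_def m eln_def add.commute)
    have "ereal (real (serious_count j)) \<le> A1 * E"
      using serious_count_le_ereal_phi[OF no_stop m(1)[unfolded \<mu>_def] m(2) d0]
      by (simp add: A1_def E m)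
    moreover have "ereal (real (serious_count j)) \<le> A2 * E"
      using serious_count_le_ereal_h[OF no_stop n(1)[unfolded \<nu>_def] n(2,3) m(2) d0]
      by (simp add: A2_def E n)
    ultimately show ?thesis
      by (cases "A1 \<le> A2") (simp_all add: min_def)
  qed
  then show ?thesis
    unfolding A1_def A2_def E_def by simp
qed

end

theorem theorem2p2:
  fixes f h :: "'a::euclidean_space \<Rightarrow> ereal"
    and f' :: "'a \<Rightarrow> 'a"
    and Mf Lf chi lam0 eps :: real
    and x0 :: 'a
  assumes f_proper: "proper_fun f" and f_convex: "convex_fun f" and f_lsc: "lsc_fun f"
    and h_proper: "proper_fun h" and h_convex: "convex_fun h" and h_lsc: "lsc_fun h"
    and dom_sub: "edom h \<subseteq> edom f"
    and subgrad_oracle: "\<And>x. x \<in> edom h \<Longrightarrow> f' x \<in> subdiff f x"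
    and Mf_nonneg: "Mf \<ge> 0" and Lf_nonneg: "Lf \<ge> 0"
    and hoelder: "\<And>x y. x \<in> edom h \<Longrightarrow> y \<in> edom h \<Longrightarrow>
                    norm (f' x - f' y) \<le> 2 * Mf + Lf * norm (x - y)"
    and Xstar_ne: "{x. \<forall>y. f x + h x \<le> f y + h y} \<noteq> {}"
    and x0_dom: "x0 \<in> edom h"
    and chi_range: "0 \<le> chi" "chi < 1"
    and lam0: "lam0 > 0"
    and eps_pos: "eps > 0"
  shows "\<exists>j. ucs_stops_at f f' h chi eps x0 lam0 j \<and>
           ereal (real j) \<le> ucs_bound Mf Lf chi lam0 eps
              (sc_modulus (\<lambda>x. f x + h x)) (sc_modulus h)
              (infdist x0 {x. \<forall>y. f x + h x \<le> f y + h y})"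
proof -
  interpret ucs_setting f h f' Mf Lf chi lam0 eps x0
    using assms by unfold_locales auto
  obtain j where stop: "ucs_stops_at f f' h chi eps x0 lam0 j" and no_stop: "no_stop_before j"
    by (rule stop_exists)
  have d0: "infdist x0 {x. \<forall>y. f x + h x \<le> f y + h y} = norm (x0 - x_star)"
    using x_star(2) by (simp add: Xstar_def)
  have "ereal (real j) \<le> ereal (real (serious_count j)) + ereal (of_int \<lceil>2 * ln (lam0 * Q / eps)\<rceil>)"
    using iteration_count_le[of j] by simp
  also have "\<dots> \<le> ucs_bound Mf Lf chi lam0 eps (sc_modulus (\<lambda>x. f x + h x)) (sc_modulus h)
                    (norm (x0 - x_star))"
    unfolding ucs_bound_def Let_def Q_def[symmetric]
    using serious_count_le_sublinear[OF no_stop]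
    by (intro add_right_mono min.boundedI serious_count_le_linear_term[OF no_stop]) simp
  finally show ?thesis
    using stop unfolding d0 by blast
qed

end
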